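(* Let $\beta>0$, $\lambda>0$, and $\mathcal A\subset\{1,\dots,p\}$ with $|\mathcal A|=k$. Then $\frac{d}{dc}P(I_\lambda\mid c,\boldsymbol z_{\mathcal A}=\mathbf 1)\big|_{c=0}=0$ for all $\lambda>0$, and $\frac{d}{dc}P(S_\lambda\mid c,\boldsymbol\beta_{\mathcal A}=\beta\mathbf 1)\big|_{c=0}\ge0$ for all $\lambda$ satisfying \[ 2\lambda_n\ge\frac{g(\tau_n)}{G(\tau_n)}, \] where $G$ and $g$ are the $N(0,1)$ cumulative distribution function and density, $\lambda_n=\lambda\sqrt n$ and $\tau_n=\sqrt n(\beta-\lambda)$.
   Context: Fix integers $n\ge1$ and $1\le k<p$. $\mathbf J$ is an all-ones matrix; vector inequalities and absolute values are componentwise. For real $c$ with $-(k-1)^{-1}<c<1$ let $\mathbf C=(1-c)\mathbf I_p+c\mathbf J_p$. For $\mathcal A$ with complement $\mathcal I$ let $\mathbf C_{\mathcal A},\mathbf C_{\mathcal I},\mathbf C_{\mathcal I\mathcal A},\mathbf C_{\mathcal A\mathcal I}$ be the submatrices (rows, columns). For a sign vector $\boldsymbol z_{\mathcal A}\in\{-1,1\}^k$ with $\mathbf Z_{\mathcal A}=\mathrm{Diag}(\boldsymbol z_{\mathcal A})$ and $\boldsymbol\beta_{\mathcal A}\in\mathbb R^k$ with that sign vector: $P(S_\lambda\mid c,\boldsymbol\beta_{\mathcal A})=P(\boldsymbol u<\sqrt n\,\mathbf Z_{\mathcal A}\boldsymbol\beta_{\mathcal A})$ with $\boldsymbol u\sim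 N(\lambda\sqrt n\,\mathbf Z_{\mathcal A}\mathbf C_{\mathcal A}^{-1}\boldsymbol z_{\mathcal A},\ \mathbf Z_{\mathcal A}\mathbf C_{\mathcal A}^{-1}\mathbf Z_{\mathcal A})$, and $P(I_\lambda\mid c,\boldsymbol z_{\mathcal A})=P(|\boldsymbol v|\le\lambda\sqrt n\mathbf 1)$ with $\boldsymbol v\sim N(\lambda\sqrt n\,\mathbf C_{\mathcal I\mathcal A}\mathbf C_{\mathcal A}^{-1}\boldsymbol z_{\mathcal A},\ \mathbf C_{\mathcal I}-\mathbf C_{\mathcal I\mathcal A}\mathbf C_{\mathcal A}^{-1}\mathbf C_{\mathcal A\mathcal I})$. (These are the lasso sign recovery events for a design with scaling matrix $\mathbf V=\mathbf I$ and completely symmetric correlation matrix $\mathbf C$.) *)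

theory Defs
  imports "HOL-Probability.Probability"
begin

text \<open>Matrices are functions nat => nat => real; vectors are nat => real; the relevant
  index set S (a finite set of naturals) is always passed explicitly.\<close>

definition cs_corr :: "real \<Rightarrow> nat \<Rightarrow> nat \<Rightarrow> real" where
  "cs_corr c i j = (if i = j then 1 else c)"

definition minv :: "nat set \<Rightarrow> (nat \<Rightarrow> nat \<Rightarrow> real) \<Rightarrow> (nat \<Rightarrow> nat \<Rightarrow> real)" where
  "minv S M = (SOME N.
      (\<forall>i\<in>S. \<forall>j\<in>S. (\<Sum>l\<in>S. M i l * N l j) = (if i = j then 1 else 0)) \<and>
      (\<forall>i\<in>S. \<forall>j\<in>S. (\<Sum>l\<in>S. N i l * M l j) = (if i = j then 1 else 0)))"

definition mdet :: "nat set \<Rightarrow> (nat \<Rightarrow> nat \<Rightarrow> real) \<Rightarrow> real" where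
  "mdet S M = (\<Sum>\<pi>\<in>{\<pi>. \<pi> permutes S}. of_int (sign \<pi>) * (\<Prod>i\<in>S. M i (\<pi> i)))"

definition mvn_density :: "nat set \<Rightarrow> (nat \<Rightarrow> real) \<Rightarrow> (nat \<Rightarrow> nat \<Rightarrow> real) \<Rightarrow> (nat \<Rightarrow> real) \<Rightarrow> real" where
  "mvn_density S mu Sg x =
     exp (- (1/2) * (\<Sum>i\<in>S. \<Sum>j\<in>S. (x i - mu i) * minv S Sg i j * (x j - mu j)))
     / sqrt ((2 * pi) ^ card S * mdet S Sg)"

definition mvn_prob :: "nat set \<Rightarrow> (nat \<Rightarrow> real) \<Rightarrow> (nat \<Rightarrow> nat \<Rightarrow> real) \<Rightarrow> (nat \<Rightarrow> real) set \<Rightarrow> real" where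
  "mvn_prob S mu Sg E =
     set_lebesgue_integral (PiM S (\<lambda>_. lborel)) E (mvn_density S mu Sg)"

text \<open>P(S_lambda | c, beta_A), with sign vector z and Z = Diag z:
  u ~ N(lambda sqrt n Z C_A^{-1} z, Z C_A^{-1} Z), event u < sqrt n Z beta_A.\<close>
definition PS :: "nat \<Rightarrow> real \<Rightarrow> real \<Rightarrow> nat set \<Rightarrow> (nat \<Rightarrow> real) \<Rightarrow> real" where
  "PS n lam c A beta =
    (let z = (\<lambda>i. sgn (beta i)); Ainv = minv A (cs_corr c) in
     mvn_prob A
       (\<lambda>i. lam * sqrt (real n) * z i * (\<Sum>j\<in>A. Ainv i j * z j))
       (\<lambda>i j. z i * Ainv i j * z j)
       {u. \<forall>i\<in>A. u i < sqrt (real n) * z i * beta i})"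

text \<open>P(I_lambda | c, z_A), I = {1..p} - A:
  v ~ N(lambda sqrt n C_IA C_A^{-1} z, C_I - C_IA C_A^{-1} C_AI), event |v| <= lambda sqrt n 1.\<close>
definition PI :: "nat \<Rightarrow> real \<Rightarrow> real \<Rightarrow> nat \<Rightarrow> nat set \<Rightarrow> (nat \<Rightarrow> real) \<Rightarrow> real" where
  "PI n lam c p A z =
    (let I = {1..p} - A; C = cs_corr c; Ainv = minv A C in
     mvn_prob I
       (\<lambda>i. lam * sqrt (real n) * (\<Sum>a\<in>A. \<Sum>b\<in>A. C i a * Ainv a b * z b))
       (\<lambda>i j. C i j - (\<Sum>a\<in>A. \<Sum>b\<in>A. C i a * Ainv a b * C b j))
       {v. \<forall>i\<in>I. \<bar>v i\<bar> \<le> lam * sqrt (real n)})"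

definition std_normal_cdf :: "real \<Rightarrow> real" where
  "std_normal_cdf x = (LBINT t:{..x}. std_normal_density t)"

end

(*
  Both probabilities are Gaussian box probabilities whose covariance matrix and its inverse are
  completely symmetric, a I + b J, with coefficients rational in c that equal the identity at
  c = 0 and satisfy a' + b' = 0 there. Each probability is therefore J(c) / sqrt((2 pi)^d det),
  where J is a box integral of exp(-q_c/2). By Jacobi's formula the determinant has derivative
  d (a' + b') = 0 at c = 0. Differentiating J under the integral sign (dominated convergence),
  the squares in the derivative of q_c cancel, so only products of one or two centred
  coordinates remain; these integrate to first moments M1 and masses M0 of a truncated
  one-dimensional Gaussian.
  For I_lambda the box [-lambda_n, lambda_n] is symmetric and the conditional mean vanishes at
  c = 0, so M1 = 0 and the derivative is 0. For S_lambda, M1 = -exp(-tau_n^2/2) and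
  M0 = sqrt(2 pi) G(tau_n), and the derivative is a nonnegative multiple of
  lambda_n M0 - exp(-tau_n^2/2)/2, which is nonnegative when 2 lambda_n >= g(tau_n)/G(tau_n).
*)

theory Submission
  imports Defs "HOL-Real_Asymp.Real_Asymp"
begin

section \<open>Inverses and determinants of completely symmetric matrices\<close>

definition is_inverse_on :: "nat set \<Rightarrow> (nat \<Rightarrow> nat \<Rightarrow> real) \<Rightarrow> (nat \<Rightarrow> nat \<Rightarrow> real) \<Rightarrow> bool" where
  "is_inverse_on S M N \<longleftrightarrow>
      (\<forall>i\<in>S. \<forall>j\<in>S. (\<Sum>l\<in>S. M i l * N l j) = (if i = j then 1 else 0)) \<and>
      (\<forall>i\<in>S. \<forall>j\<in>S. (\<Sum>l\<in>S. N i l * M l j) = (if i = j then 1 else 0))"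

lemma is_inverse_on_sym: "is_inverse_on S M N \<Longrightarrow> is_inverse_on S N M"
  unfolding is_inverse_on_def by blast

lemma minv_is_inverse_on:
  assumes "is_inverse_on S M N"
  shows "is_inverse_on S M (minv S M)"
proof -
  have "minv S M = (SOME N. is_inverse_on S M N)" unfolding minv_def is_inverse_on_def ..
  then show ?thesis using someI[of "is_inverse_on S M" N] assms by simp
qed

lemma sum_delta_mult_left:
  fixes f :: "nat \<Rightarrow> real"
  assumes "finite S" "i \<in> S"
  shows "(\<Sum>l\<in>S. (if i = l then a else 0) * f l) = a * f i"
proof -
  have "(\<Sum>l\<in>S. (if i = l then a else 0) * f l) = (\<Sum>l\<in>S. if i = l then a * f l else 0)"
    by (intro sum.cong) auto
  then show ?thesis using assms by (simp add: sum.delta)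
qed

lemma sum_delta_mult_right:
  fixes f :: "nat \<Rightarrow> real"
  assumes "finite S" "j \<in> S"
  shows "(\<Sum>l\<in>S. f l * (if l = j then a else 0)) = f j * a"
  using sum_delta_mult_left[OF assms, of a f] by (simp add: mult.commute eq_commute)

lemma minv_eq:
  assumes fin: "finite S" and inv: "is_inverse_on S M N" and i: "i \<in> S" and j: "j \<in> S"
  shows "minv S M i j = N i j"
proof -
  let ?N = "minv S M"
  have N: "is_inverse_on S M ?N" by (rule minv_is_inverse_on[OF inv])
  have "?N i j = (\<Sum>l\<in>S. ?N i l * (\<Sum>r\<in>S. M l r * N r j))"
  proof -
    have "(\<Sum>l\<in>S. ?N i l * (\<Sum>r\<in>S. M l r * N r j)) = (\<Sum>l\<in>S. ?N i l * (if l = j then 1 else 0))"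
      using inv j unfolding is_inverse_on_def by (intro sum.cong) auto
    then show ?thesis using sum_delta_mult_right[OF fin j] by simp
  qed
  also have "\<dots> = (\<Sum>l\<in>S. \<Sum>r\<in>S. ?N i l * M l r * N r j)"
    by (simp add: sum_distrib_left mult.assoc)
  also have "\<dots> = (\<Sum>r\<in>S. \<Sum>l\<in>S. ?N i l * M l r * N r j)"
    by (rule sum.swap)
  also have "\<dots> = (\<Sum>r\<in>S. (\<Sum>l\<in>S. ?N i l * M l r) * N r j)"
    by (simp add: sum_distrib_right)
  also have "\<dots> = (\<Sum>r\<in>S. (if i = r then 1 else 0) * N r j)"
    using N i unfolding is_inverse_on_def by (intro sum.cong) auto
  also have "\<dots> = N i j" using sum_delta_mult_left[OF fin i] by simp
  finally show ?thesis .
qed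

lemma minv_minv:
  assumes "finite S" "is_inverse_on S M N" "i \<in> S" "j \<in> S"
  shows "minv S (minv S M) i j = M i j"
  using assms minv_eq is_inverse_on_sym[OF minv_is_inverse_on] by blast

definition compsym :: "real \<Rightarrow> real \<Rightarrow> nat \<Rightarrow> nat \<Rightarrow> real" where
  "compsym a b i j = (if i = j then a else 0) + b"

lemma cs_corr_eq_compsym: "cs_corr c = compsym (1 - c) c"
  unfolding cs_corr_def compsym_def by (intro ext) simp

lemma sum_compsym_row:
  assumes "finite S" "i \<in> S"
  shows "(\<Sum>j\<in>S. compsym a b i j) = a + real (card S) * b"
  using assms by (simp add: compsym_def sum.distrib)

lemma sum_compsym_mult:
  assumes fin: "finite S" and "i \<in> S" "j \<in> S"
  shows "(\<Sum>l\<in>S. compsym a b i l * compsym x y l j)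
      = compsym (a * x) (a * y + b * x + real (card S) * b * y) i j"
proof -
  have "(\<Sum>l\<in>S. compsym a b i l * compsym x y l j)
      = (\<Sum>l\<in>S. (if i = l then a else 0) * (if l = j then x else 0)) + (\<Sum>l\<in>S. (if i = l then a else 0) * y)
        + (\<Sum>l\<in>S. b * (if l = j then x else 0)) + (\<Sum>l\<in>S. b * y)"
    unfolding compsym_def by (simp add: distrib_left distrib_right sum.distrib)
  also have "\<dots> = (if i = j then a * x else 0) + a * y + b * x + real (card S) * b * y"
    using sum_delta_mult_left[OF fin \<open>i \<in> S\<close>, of a "\<lambda>l. if l = j then x else 0"]
      sum_delta_mult_left[OF fin \<open>i \<in> S\<close>, of a "\<lambda>_. y"]
      sum_delta_mult_right[OF fin \<open>j \<in> S\<close>, of "\<lambda>_. b"] by simp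
  finally show ?thesis unfolding compsym_def by simp
qed

lemma compsym_inverse:
  assumes fin: "finite S" and a: "a \<noteq> 0" and ab: "a + real (card S) * b \<noteq> 0"
  shows "is_inverse_on S (compsym a b) (compsym (1 / a) (- b / (a * (a + real (card S) * b))))"
proof -
  define d where "d = a + real (card S) * b"
  define g where "g = - b / (a * d)"
  have "d * g = - b / a"
    using a ab unfolding g_def d_def by simp
  then have "a * g + b * (1 / a) + real (card S) * b * g = 0"
    "1 / a * b + g * a + real (card S) * g * b = 0"
    unfolding d_def by (simp_all add: algebra_simps)
  then have "compsym (a * (1 / a)) (a * g + b * (1 / a) + real (card S) * b * g) i j = (if i = j then 1 else 0)"
    "compsym (1 / a * a) (1 / a * b + g * a + real (card S) * g * b) i j = (if i = j then 1 else 0)" for i j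
    using a unfolding compsym_def by simp_all
  then show ?thesis
    unfolding is_inverse_on_def d_def[symmetric] g_def[symmetric] by (simp add: sum_compsym_mult[OF fin])
qed

lemma mdet_cong:
  assumes "\<And>i j. i \<in> S \<Longrightarrow> j \<in> S \<Longrightarrow> M i j = M' i j"
  shows "mdet S M = mdet S M'"
  unfolding mdet_def
proof (intro sum.cong refl)
  fix \<pi> assume "\<pi> \<in> {\<pi>. \<pi> permutes S}"
  then have "\<pi> i \<in> S" if "i \<in> S" for i using that by (simp add: permutes_in_image)
  then show "of_int (sign \<pi>) * (\<Prod>i\<in>S. M i (\<pi> i)) = of_int (sign \<pi>) * (\<Prod>i\<in>S. M' i (\<pi> i))"
    using assms by (metis (no_types, lifting) prod.cong)
qed

text \<open>A permutation other than the identity moves at least two points, so it leaves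
  an off-diagonal factor even after one factor has been removed.\<close>
lemma prod_identity_perm_remove_eq_0:
  fixes M :: "nat \<Rightarrow> nat \<Rightarrow> real"
  assumes fin: "finite S" and p: "\<pi> permutes S" and nid: "\<pi> \<noteq> id" and x: "x \<in> S"
    and M: "\<And>i j. i \<in> S \<Longrightarrow> j \<in> S \<Longrightarrow> M i j = (if i = j then 1 else 0)"
  shows "(\<Prod>y\<in>S-{x}. M y (\<pi> y)) = 0"
proof -
  obtain y0 where y0: "\<pi> y0 \<noteq> y0" using nid by (metis eq_id_iff)
  have y0S: "y0 \<in> S" using y0 permutes_not_in[OF p, of y0] by blast
  have "\<exists>y\<in>S-{x}. \<pi> y \<noteq> y"
  proof (cases "y0 = x")
    case True
    have "\<pi> (\<pi> x) \<noteq> \<pi> x" using True y0 permutes_inj[OF p] by (metis injD)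
    then show ?thesis using True y0 p x by (metis Diff_iff permutes_in_image singletonD)
  qed (use y0 y0S in blast)
  then obtain y where y: "y \<in> S - {x}" "\<pi> y \<noteq> y" by blast
  have "M y (\<pi> y) = 0" using M[of y "\<pi> y"] y p by (simp add: permutes_in_image)
  then show ?thesis by (intro prod_zero) (use fin y(1) in auto)
qed

lemma mdet_identity:
  fixes M :: "nat \<Rightarrow> nat \<Rightarrow> real"
  assumes fin: "finite S" and M: "\<And>i j. i \<in> S \<Longrightarrow> j \<in> S \<Longrightarrow> M i j = (if i = j then 1 else 0)"
  shows "mdet S M = 1"
proof -
  have "of_int (sign \<pi>) * (\<Prod>i\<in>S. M i (\<pi> i)) = (if \<pi> = id then 1 else 0)" if p: "\<pi> permutes S" for \<pi>
  proof (cases "\<pi> = id")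
    case False
    then obtain x where "x \<in> S" using p by (metis eq_id_iff permutes_not_in)
    then have "(\<Prod>i\<in>S. M i (\<pi> i)) = M x (\<pi> x) * (\<Prod>y\<in>S-{x}. M y (\<pi> y))"
      using fin by (simp add: prod.remove)
    then show ?thesis using prod_identity_perm_remove_eq_0[OF fin p False \<open>x \<in> S\<close> M] False by simp
  qed (use M in \<open>auto intro!: prod.neutral\<close>)
  then have "mdet S M = (\<Sum>\<pi>\<in>{\<pi>. \<pi> permutes S}. if \<pi> = id then 1 else 0)"
    unfolding mdet_def by (intro sum.cong) auto
  then show ?thesis using finite_permutations[OF fin] by (simp add: sum.delta' permutes_id)
qed

lemma has_real_derivative_mdet_at_identity:
  fixes M :: "real \<Rightarrow> nat \<Rightarrow> nat \<Rightarrow> real"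
  assumes fin: "finite S"
    and M': "\<And>i j. i \<in> S \<Longrightarrow> j \<in> S \<Longrightarrow> ((\<lambda>c. M c i j) has_real_derivative M' i j) (at 0)"
    and M0: "\<And>i j. i \<in> S \<Longrightarrow> j \<in> S \<Longrightarrow> M 0 i j = (if i = j then 1 else 0)"
  shows "((\<lambda>c. mdet S (M c)) has_real_derivative (\<Sum>i\<in>S. M' i i)) (at 0)"
proof -
  let ?P = "{\<pi>. \<pi> permutes S}"
  define F where "F \<pi> = of_int (sign \<pi>) * (\<Sum>x\<in>S. M' x (\<pi> x) * (\<Prod>y\<in>S-{x}. M 0 y (\<pi> y)))" for \<pi>
  have D: "((\<lambda>c. mdet S (M c)) has_real_derivative (\<Sum>\<pi>\<in>?P. F \<pi>)) (at 0)"
    unfolding mdet_def F_def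
  proof (intro DERIV_sum DERIV_cmult has_field_derivative_prod)
    fix \<pi> x assume "\<pi> \<in> ?P" "x \<in> S"
    then show "((\<lambda>c. M c x (\<pi> x)) has_real_derivative M' x (\<pi> x)) (at 0)"
      by (intro M') (auto simp: permutes_in_image)
  qed
  have "F \<pi> = (if \<pi> = id then (\<Sum>i\<in>S. M' i i) else 0)" if "\<pi> \<in> ?P" for \<pi>
  proof (cases "\<pi> = id")
    case True
    have "(\<Prod>y\<in>S-{x}. M 0 y (\<pi> y)) = 1" if "x \<in> S" for x
      using M0 True by (intro prod.neutral) auto
    then show ?thesis unfolding F_def using True by (auto intro!: sum.cong)
  next
    case False
    then show ?thesis
      unfolding F_def using prod_identity_perm_remove_eq_0[OF fin _ False _ M0] that by simp
  qed
  then have "(\<Sum>\<pi>\<in>?P. F \<pi>) = (\<Sum>\<pi>\<in>?P. if \<pi> = id then (\<Sum>i\<in>S. M' i i) else 0)"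
    by (intro sum.cong) auto
  also have "\<dots> = (\<Sum>i\<in>S. M' i i)"
    using finite_permutations[OF fin] by (simp add: sum.delta' permutes_id)
  finally show ?thesis using D by simp
qed

lemma has_real_derivative_divide_sqrt_mdet:
  fixes M :: "real \<Rightarrow> nat \<Rightarrow> nat \<Rightarrow> real"
  assumes fin: "finite S" and J: "(J has_real_derivative D) (at 0)"
    and M': "\<And>i j. i \<in> S \<Longrightarrow> j \<in> S \<Longrightarrow> ((\<lambda>c. M c i j) has_real_derivative M' i j) (at 0)"
    and M0: "\<And>i j. i \<in> S \<Longrightarrow> j \<in> S \<Longrightarrow> M 0 i j = (if i = j then 1 else 0)"
    and trace: "(\<Sum>i\<in>S. M' i i) = 0"
  shows "((\<lambda>c. J c / sqrt ((2 * pi) ^ card S * mdet S (M c)))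
           has_real_derivative D / sqrt ((2 * pi) ^ card S)) (at 0)"
proof -
  define r where "r = (2 * pi) ^ card S"
  have r: "r > 0" unfolding r_def by simp
  have det0: "mdet S (M 0) = 1" by (rule mdet_identity[OF fin M0])
  have "((\<lambda>c. mdet S (M c)) has_real_derivative 0) (at 0)"
    using has_real_derivative_mdet_at_identity[OF fin M' M0] trace by simp
  from DERIV_cmult[OF this, of r]
  have "((\<lambda>c. r * mdet S (M c)) has_real_derivative 0) (at 0)" by simp
  from DERIV_chain2[OF DERIV_real_sqrt this] r
  have "((\<lambda>c. sqrt (r * mdet S (M c))) has_real_derivative 0) (at 0)" unfolding det0 by simp
  from DERIV_divide[OF J this] r
  have "((\<lambda>c. J c / sqrt (r * mdet S (M c))) has_real_derivative D * sqrt r / (sqrt r * sqrt r)) (at 0)"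
    unfolding det0 by simp
  moreover have "D * sqrt r / (sqrt r * sqrt r) = D / sqrt r" using r by (simp add: field_simps)
  ultimately show ?thesis unfolding r_def by simp
qed

lemma has_real_derivative_divide_sqrt_mdet_compsym:
  assumes fin: "finite S" and J: "(J has_real_derivative D) (at 0)"
    and a: "(a has_real_derivative a') (at 0)" and b: "(b has_real_derivative - a') (at 0)"
    and a0: "a 0 = 1" and b0: "b 0 = 0"
  shows "((\<lambda>c. J c / sqrt ((2 * pi) ^ card S * mdet S (compsym (a c) (b c))))
           has_real_derivative D / sqrt ((2 * pi) ^ card S)) (at 0)"
proof (rule has_real_derivative_divide_sqrt_mdet[OF fin J])
  show "((\<lambda>c. compsym (a c) (b c) i j) has_real_derivative compsym a' (- a') i j) (at 0)" for i j
    unfolding compsym_def by (auto intro!: derivative_eq_intros a b)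
qed (simp_all add: compsym_def a0 b0)

section \<open>Differentiation under the integral sign\<close>

lemma has_real_derivative_integral:
  fixes f f' :: "real \<Rightarrow> 'a \<Rightarrow> real" and G :: "'a \<Rightarrow> real"
  assumes \<delta>: "\<delta> > 0"
    and int: "\<And>c. \<bar>c\<bar> < \<delta> \<Longrightarrow> integrable M (f c)"
    and der: "\<And>c x. \<bar>c\<bar> < \<delta> \<Longrightarrow> x \<in> space M \<Longrightarrow> ((\<lambda>c. f c x) has_real_derivative f' c x) (at c)"
    and bnd: "\<And>c x. \<bar>c\<bar> < \<delta> \<Longrightarrow> x \<in> space M \<Longrightarrow> \<bar>f' c x\<bar> \<le> G x"
    and G: "integrable M G"
    and meas: "f' 0 \<in> borel_measurable M"
  shows "((\<lambda>c. \<integral>x. f c x \<partial>M) has_real_derivative (\<integral>x. f' 0 x \<partial>M)) (at 0)"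
proof -
  let ?F = "\<lambda>c. \<integral>x. f c x \<partial>M"
  have ball: "at (0::real) within ball 0 \<delta> = at 0" using \<delta> by (intro at_within_open) auto
  have "((\<lambda>c. (?F c - ?F 0) / (c - 0)) \<longlongrightarrow> (\<integral>x. f' 0 x \<partial>M)) (at 0 within ball 0 \<delta>)"
    unfolding tendsto_at_iff_sequentially
  proof (intro allI impI)
    fix X :: "nat \<Rightarrow> real"
    assume X: "\<forall>i. X i \<in> ball 0 \<delta> - {0}" and X0: "X \<longlonglongrightarrow> 0"
    have Xi: "X i \<noteq> 0" "\<bar>X i\<bar> < \<delta>" for i using X[rule_format, of i] by auto
    define s where "s i x = (f (X i) x - f 0 x) / X i" for i x
    have f0: "integrable M (f 0)" using int \<delta> by simp
    have "(\<lambda>i. integral\<^sup>L M (s i)) \<longlonglongrightarrow> integral\<^sup>L M (f' 0)"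
    proof (rule integral_dominated_convergence[where w = G])
      show "s i \<in> borel_measurable M" for i
        unfolding s_def using int[OF Xi(2)] f0 by measurable
      show "AE x in M. (\<lambda>i. s i x) \<longlonglongrightarrow> f' 0 x"
      proof (rule AE_I2)
        fix x assume x: "x \<in> space M"
        have "((\<lambda>c. f c x) has_real_derivative f' 0 x) (at 0)" using der[OF _ x] \<delta> by simp
        then have "((\<lambda>c. (f c x - f 0 x) / (c - 0)) \<longlongrightarrow> f' 0 x) (at 0 within UNIV)"
          by (simp add: has_field_derivative_iff)
        then have "((\<lambda>c. (f c x - f 0 x) / (c - 0)) \<circ> X) \<longlonglongrightarrow> f' 0 x"
          unfolding tendsto_at_iff_sequentially using Xi X0 by auto
        then show "(\<lambda>i. s i x) \<longlonglongrightarrow> f' 0 x" by (simp add: s_def o_def)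
      qed
      show "AE x in M. norm (s i x) \<le> G x" for i
      proof (rule AE_I2)
        fix x assume x: "x \<in> space M"
        have "norm (f (X i) x - f 0 x) \<le> G x * norm (X i - 0)"
          by (rule field_differentiable_bound[where S = "ball 0 \<delta>"])
            (use Xi \<delta> der[OF _ x] bnd[OF _ x] in \<open>auto intro: has_field_derivative_at_within\<close>)
        then show "norm (s i x) \<le> G x" using Xi(1) by (simp add: s_def divide_le_eq)
      qed
    qed (use meas G in auto)
    moreover have "integral\<^sup>L M (s i) = (?F (X i) - ?F 0) / (X i - 0)" for i
      unfolding s_def using int[OF Xi(2)] f0 by simp
    ultimately show "((\<lambda>c. (?F c - ?F 0) / (c - 0)) \<circ> X) \<longlonglongrightarrow> (\<integral>x. f' 0 x \<partial>M)"
      by (simp add: o_def)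
  qed
  then show ?thesis unfolding has_field_derivative_iff ball .
qed

lemma eventually_nhds_abs_less:
  fixes f :: "real \<Rightarrow> real"
  assumes "isCont f x" "\<bar>f x\<bar> < B"
  shows "\<forall>\<^sub>F y in nhds x. \<bar>f y\<bar> < B"
proof -
  have "(f \<longlongrightarrow> f x) (nhds x)" using assms(1) by (simp add: isCont_def tendsto_at_iff_tendsto_nhds)
  from topological_tendstoD[OF this open_greaterThanLessThan[of "- B" B]] assms(2)
  show ?thesis by (auto simp: abs_less_iff elim: eventually_mono)
qed

lemma eventually_nhds_nonzero:
  fixes f :: "real \<Rightarrow> real"
  assumes "isCont f x" "f x \<noteq> 0"
  shows "\<forall>\<^sub>F y in nhds x. f y \<noteq> 0"
  using assms by (intro tendsto_imp_eventually_ne) (simp_all add: isCont_def tendsto_at_iff_tendsto_nhds)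

section \<open>Gaussian integrals over boxes\<close>

abbreviation PiM_lborel :: "nat set \<Rightarrow> (nat \<Rightarrow> real) measure" where
  "PiM_lborel S \<equiv> PiM S (\<lambda>_. lborel)"

lemma product_sigma_finite_lborel: "product_sigma_finite (\<lambda>_::nat. lborel)"
  by unfold_locales

lemma exp_neg_sq_div_8_eq: "exp (- (u::real)\<^sup>2 / 8) = sqrt (8 * pi) * normal_density 0 2 u"
  unfolding normal_density_def by (simp add: real_sqrt_mult)

lemma integrable_exp_neg_sq_div_8:
  "integrable lborel (\<lambda>u::real. exp (- u\<^sup>2 / 8))"
  "integrable lborel (\<lambda>u::real. u\<^sup>2 * exp (- u\<^sup>2 / 8))"
proof -
  show "integrable lborel (\<lambda>u::real. exp (- u\<^sup>2 / 8))"
    unfolding exp_neg_sq_div_8_eq by simp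
  have "integrable lborel (\<lambda>u::real. sqrt (8 * pi) * (normal_density 0 2 u * (u - 0)^2))"
    using integrable_normal_moment[where \<mu>=0 and \<sigma>=2 and k=2] by simp
  then show "integrable lborel (\<lambda>u::real. u\<^sup>2 * exp (- u\<^sup>2 / 8))"
    unfolding exp_neg_sq_div_8_eq by (simp add: ac_simps)
qed

lemma exp_neg_sum_sq_div_8:
  fixes x :: "nat \<Rightarrow> real"
  shows "finite S \<Longrightarrow> exp (- (\<Sum>i\<in>S. (x i)\<^sup>2) / 8) = (\<Prod>i\<in>S. exp (- (x i)\<^sup>2 / 8))"
  by (simp add: exp_sum[symmetric] sum_negf sum_divide_distrib)

lemma integrable_PiM_exp_neg_sum_sq:
  fixes S :: "nat set"
  assumes fin: "finite S"
  shows "integrable (PiM_lborel S) (\<lambda>x. exp (- (\<Sum>i\<in>S. (x i)\<^sup>2) / 8))"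
    and "integrable (PiM_lborel S) (\<lambda>x. (\<Sum>i\<in>S. (x i)\<^sup>2) * exp (- (\<Sum>i\<in>S. (x i)\<^sup>2) / 8))"
proof -
  note prod_integrable = product_sigma_finite.product_integrable_prod[OF product_sigma_finite_lborel fin]
  show "integrable (PiM_lborel S) (\<lambda>x. exp (- (\<Sum>i\<in>S. (x i)\<^sup>2) / 8))"
    unfolding exp_neg_sum_sq_div_8[OF fin] by (rule prod_integrable) (rule integrable_exp_neg_sq_div_8)
  have "(\<Sum>i\<in>S. (x i)\<^sup>2) * exp (- (\<Sum>i\<in>S. (x i)\<^sup>2) / 8)
      = (\<Sum>j\<in>S. \<Prod>i\<in>S. (if i = j then (x i)\<^sup>2 else 1) * exp (- (x i)\<^sup>2 / 8))" for x :: "nat \<Rightarrow> real"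
  proof -
    have "(\<Prod>i\<in>S. (if i = j then (x i)\<^sup>2 else 1) * exp (- (x i)\<^sup>2 / 8))
        = (x j)\<^sup>2 * exp (- (\<Sum>i\<in>S. (x i)\<^sup>2) / 8)" if "j \<in> S" for j
      using fin that exp_neg_sum_sq_div_8[OF fin, of x] by (simp add: prod.distrib prod.delta)
    then show ?thesis by (simp add: sum_distrib_right)
  qed
  moreover have "integrable (PiM_lborel S)
      (\<lambda>x. \<Sum>j\<in>S. \<Prod>i\<in>S. (if i = j then (x i)\<^sup>2 else 1) * exp (- (x i)\<^sup>2 / 8))"
  proof (intro Bochner_Integration.integrable_sum prod_integrable)
    fix i j :: nat
    show "integrable lborel (\<lambda>u::real. (if i = j then u\<^sup>2 else 1) * exp (- u\<^sup>2 / 8))"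
      using integrable_exp_neg_sq_div_8 by (cases "i = j") simp_all
  qed
  ultimately show "integrable (PiM_lborel S) (\<lambda>x. (\<Sum>i\<in>S. (x i)\<^sup>2) * exp (- (\<Sum>i\<in>S. (x i)\<^sup>2) / 8))"
    by simp
qed

definition sym_qform :: "nat set \<Rightarrow> real \<Rightarrow> real \<Rightarrow> real \<Rightarrow> (nat \<Rightarrow> real) \<Rightarrow> real" where
  "sym_qform S a g m x = a * (\<Sum>i\<in>S. (x i - m)\<^sup>2) + g * (\<Sum>i\<in>S. (x i - m))\<^sup>2"

definition sym_qform_deriv ::
    "nat set \<Rightarrow> real \<Rightarrow> real \<Rightarrow> real \<Rightarrow> real \<Rightarrow> real \<Rightarrow> real \<Rightarrow> (nat \<Rightarrow> real) \<Rightarrow> real" where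
  "sym_qform_deriv S a a' g g' m m' x = a' * (\<Sum>i\<in>S. (x i - m)\<^sup>2) + g' * (\<Sum>i\<in>S. (x i - m))\<^sup>2
      - 2 * m' * (a * (\<Sum>i\<in>S. (x i - m)) + g * real (card S) * (\<Sum>i\<in>S. (x i - m)))"

lemma has_real_derivative_sym_qform:
  assumes "(\<alpha> has_real_derivative a') (at c)" "(\<gamma> has_real_derivative g') (at c)"
    "(\<mu> has_real_derivative m') (at c)"
  shows "((\<lambda>c. sym_qform S (\<alpha> c) (\<gamma> c) (\<mu> c) x) has_real_derivative
           sym_qform_deriv S (\<alpha> c) a' (\<gamma> c) g' (\<mu> c) m' x) (at c)"
  unfolding sym_qform_def
  by (rule derivative_eq_intros assms refl | simp)+
    (simp add: sym_qform_deriv_def sum_distrib_left sum_distrib_right sum_negf sum_subtractf algebra_simps)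

lemma sum_power2_diff_ge:
  fixes x :: "nat \<Rightarrow> real"
  assumes m: "\<bar>m\<bar> \<le> K"
  shows "(\<Sum>i\<in>S. (x i - m)\<^sup>2) \<ge> (\<Sum>i\<in>S. (x i)\<^sup>2) / 2 - real (card S) * K\<^sup>2"
proof -
  have mK: "m\<^sup>2 \<le> K\<^sup>2" using power_mono[OF m abs_ge_zero, of 2] by simp
  have "(x i)\<^sup>2 / 2 - K\<^sup>2 \<le> (x i - m)\<^sup>2" for i
  proof -
    have "(x i - m)\<^sup>2 - ((x i)\<^sup>2 / 2 - m\<^sup>2) = (x i - 2 * m)\<^sup>2 / 2"
      by (simp add: power2_eq_square algebra_simps)
    then show ?thesis using mK zero_le_power2[of "x i - 2 * m"] by linarith
  qed
  then have "(\<Sum>i\<in>S. (x i)\<^sup>2 / 2 - K\<^sup>2) \<le> (\<Sum>i\<in>S. (x i - m)\<^sup>2)" by (intro sum_mono)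
  then show ?thesis by (simp add: sum_subtractf sum_divide_distrib)
qed

lemma sum_power2_diff_le:
  fixes x :: "nat \<Rightarrow> real"
  assumes m: "\<bar>m\<bar> \<le> K"
  shows "(\<Sum>i\<in>S. (x i - m)\<^sup>2) \<le> 2 * (\<Sum>i\<in>S. (x i)\<^sup>2) + 2 * real (card S) * K\<^sup>2"
proof -
  have mK: "m\<^sup>2 \<le> K\<^sup>2" using power_mono[OF m abs_ge_zero, of 2] by simp
  have "(x i - m)\<^sup>2 \<le> 2 * (x i)\<^sup>2 + 2 * K\<^sup>2" for i
  proof -
    have "2 * (x i)\<^sup>2 + 2 * m\<^sup>2 - (x i - m)\<^sup>2 = (x i + m)\<^sup>2"
      by (simp add: power2_eq_square algebra_simps)
    then show ?thesis using mK zero_le_power2[of "x i + m"] by linarith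
  qed
  then have "(\<Sum>i\<in>S. (x i - m)\<^sup>2) \<le> (\<Sum>i\<in>S. 2 * (x i)\<^sup>2 + 2 * K\<^sup>2)" by (intro sum_mono)
  then show ?thesis by (simp add: sum.distrib sum_distrib_left)
qed

lemma abs_sum_le_card_plus_sum_power2:
  fixes y :: "nat \<Rightarrow> real"
  shows "\<bar>\<Sum>i\<in>S. y i\<bar> \<le> real (card S) + (\<Sum>i\<in>S. (y i)\<^sup>2)"
proof -
  have "\<bar>y i\<bar> \<le> 1 + (y i)\<^sup>2" for i
  proof -
    have "(\<bar>y i\<bar> - 1/2)\<^sup>2 = (y i)\<^sup>2 - \<bar>y i\<bar> + 1/4" by (simp add: power2_eq_square algebra_simps)
    then show ?thesis using zero_le_power2[of "\<bar>y i\<bar> - 1/2"] by linarith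
  qed
  then have "(\<Sum>i\<in>S. \<bar>y i\<bar>) \<le> (\<Sum>i\<in>S. 1 + (y i)\<^sup>2)" by (intro sum_mono)
  then have "(\<Sum>i\<in>S. \<bar>y i\<bar>) \<le> real (card S) + (\<Sum>i\<in>S. (y i)\<^sup>2)" by (simp add: sum.distrib)
  then show ?thesis using sum_abs[of y S] by linarith
qed

lemma sym_qform_ge:
  fixes S :: "nat set" and x :: "nat \<Rightarrow> real"
  assumes fin: "finite S" and a: "a - real (card S) * \<bar>g\<bar> \<ge> 1/2" and m: "\<bar>m\<bar> \<le> K"
  shows "sym_qform S a g m x \<ge> (\<Sum>i\<in>S. (x i)\<^sup>2) / 4 - real (card S) * K\<^sup>2 / 2"
proof -
  define s where "s = (\<Sum>i\<in>S. (x i - m)\<^sup>2)"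
  define t where "t = (\<Sum>i\<in>S. (x i - m))"
  have s0: "s \<ge> 0" unfolding s_def by (intro sum_nonneg) auto
  have "t\<^sup>2 \<le> s * real (card S)" unfolding s_def t_def by (rule sum_squared_le_sum_of_squares)
  then have "\<bar>g\<bar> * t\<^sup>2 \<le> \<bar>g\<bar> * (s * real (card S))" by (simp add: mult_left_mono)
  moreover have "- (\<bar>g\<bar> * t\<^sup>2) \<le> g * t\<^sup>2" using abs_ge_minus_self[of "g * t\<^sup>2"] by (simp add: abs_mult)
  ultimately have "sym_qform S a g m x \<ge> (a - real (card S) * \<bar>g\<bar>) * s"
    unfolding sym_qform_def s_def[symmetric] t_def[symmetric] by (simp add: algebra_simps)
  moreover have "(1/2) * s \<le> (a - real (card S) * \<bar>g\<bar>) * s" using a s0 by (rule mult_right_mono)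
  moreover have "s \<ge> (\<Sum>i\<in>S. (x i)\<^sup>2) / 2 - real (card S) * K\<^sup>2"
    unfolding s_def by (rule sum_power2_diff_ge[OF m])
  ultimately show ?thesis by linarith
qed

lemma exp_neg_sym_qform_le:
  fixes S :: "nat set" and x :: "nat \<Rightarrow> real"
  assumes "finite S" and "a - real (card S) * \<bar>g\<bar> \<ge> 1/2" and "\<bar>m\<bar> \<le> K"
  shows "exp (- sym_qform S a g m x / 2)
    \<le> exp (real (card S) * K\<^sup>2 / 4) * exp (- (\<Sum>i\<in>S. (x i)\<^sup>2) / 8)"
  using sym_qform_ge[OF assms, of x] by (simp add: mult_exp_exp)

lemma abs_sym_qform_deriv_le:
  fixes S :: "nat set" and x :: "nat \<Rightarrow> real"
  assumes fin: "finite S" and K: "K \<ge> 0"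
    and b: "\<bar>a\<bar> \<le> K" "\<bar>a'\<bar> \<le> K" "\<bar>g\<bar> \<le> K" "\<bar>g'\<bar> \<le> K" "\<bar>m\<bar> \<le> K" "\<bar>m'\<bar> \<le> K"
  defines "n \<equiv> real (card S)"
  shows "\<bar>sym_qform_deriv S a a' g g' m m' x\<bar>
    \<le> (K + K * n + 2 * K\<^sup>2 * (1 + n)) * (2 * (\<Sum>i\<in>S. (x i)\<^sup>2) + 2 * n * K\<^sup>2) + 2 * K\<^sup>2 * (1 + n) * n"
proof -
  define s where "s = (\<Sum>i\<in>S. (x i - m)\<^sup>2)"
  define t where "t = (\<Sum>i\<in>S. (x i - m))"
  define X where "X = (\<Sum>i\<in>S. (x i)\<^sup>2)"
  have n0: "n \<ge> 0" unfolding n_def by simp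
  have s0: "s \<ge> 0" unfolding s_def by (intro sum_nonneg) auto
  have ts: "t\<^sup>2 \<le> s * n" unfolding s_def t_def n_def by (rule sum_squared_le_sum_of_squares)
  have tabs: "\<bar>t\<bar> \<le> n + s"
    unfolding t_def n_def s_def by (rule abs_sum_le_card_plus_sum_power2)
  have sX: "s \<le> 2 * X + 2 * n * K\<^sup>2"
    unfolding s_def X_def n_def by (rule sum_power2_diff_le[OF b(5)])
  have deriv_eq: "sym_qform_deriv S a a' g g' m m' x = a' * s + g' * t\<^sup>2 - 2 * m' * (a * t + g * n * t)"
    unfolding sym_qform_deriv_def s_def t_def n_def by simp
  have e1: "\<bar>a' * s\<bar> \<le> K * s" using b(2) s0 by (simp add: abs_mult mult_right_mono)
  have e2: "\<bar>g' * t\<^sup>2\<bar> \<le> K * (s * n)"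
  proof -
    have "\<bar>g' * t\<^sup>2\<bar> = \<bar>g'\<bar> * t\<^sup>2" by (simp add: abs_mult)
    also have "\<dots> \<le> K * t\<^sup>2" using b(4) by (simp add: mult_right_mono)
    also have "\<dots> \<le> K * (s * n)" using ts K by (simp add: mult_left_mono)
    finally show ?thesis .
  qed
  have e3: "\<bar>2 * m' * (a * t + g * n * t)\<bar> \<le> 2 * K * (K + K * n) * (n + s)"
  proof -
    have "\<bar>a * t + g * n * t\<bar> \<le> \<bar>a\<bar> * \<bar>t\<bar> + \<bar>g\<bar> * n * \<bar>t\<bar>"
      using n0 by (simp add: abs_mult abs_triangle_ineq[THEN order_trans])
    also have "\<dots> \<le> K * \<bar>t\<bar> + K * n * \<bar>t\<bar>"
      using b(1,3) n0 by (intro add_mono mult_right_mono) auto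
    also have "\<dots> = (K + K * n) * \<bar>t\<bar>" by (simp add: algebra_simps)
    also have "\<dots> \<le> (K + K * n) * (n + s)" using tabs K n0 by (intro mult_left_mono) auto
    finally have h: "\<bar>a * t + g * n * t\<bar> \<le> (K + K * n) * (n + s)" .
    have "\<bar>2 * m' * (a * t + g * n * t)\<bar> = 2 * \<bar>m'\<bar> * \<bar>a * t + g * n * t\<bar>" by (simp add: abs_mult)
    also have "\<dots> \<le> 2 * K * ((K + K * n) * (n + s))"
      using b(6) h by (intro mult_mono) auto
    finally show ?thesis by simp
  qed
  have "\<bar>sym_qform_deriv S a a' g g' m m' x\<bar> \<le> K * s + K * (s * n) + 2 * K * (K + K * n) * (n + s)"
    unfolding deriv_eq using e1 e2 e3 by linarith
  also have "\<dots> = (K + K * n + 2 * K\<^sup>2 * (1 + n)) * s + 2 * K\<^sup>2 * (1 + n) * n"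
    by (simp add: power2_eq_square algebra_simps)
  also have "\<dots> \<le> (K + K * n + 2 * K\<^sup>2 * (1 + n)) * (2 * X + 2 * n * K\<^sup>2) + 2 * K\<^sup>2 * (1 + n) * n"
    using sX K n0 by (intro add_right_mono mult_left_mono) auto
  finally show ?thesis unfolding X_def .
qed

definition box_gauss_integral :: "nat set \<Rightarrow> real set \<Rightarrow> real \<Rightarrow> real \<Rightarrow> real \<Rightarrow> real" where
  "box_gauss_integral S T a g m =
     (\<integral>x. (\<Prod>i\<in>S. indicator T (x i)) * exp (- sym_qform S a g m x / 2) \<partial>PiM_lborel S)"

lemma prod_indicator_bounds:
  "0 \<le> (\<Prod>i\<in>S. indicator T (x i) :: real)" "(\<Prod>i\<in>S. indicator T (x i) :: real) \<le> 1"
  by (auto intro: prod_nonneg prod_le_1)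

text \<open>The bound \<open>\<alpha> c - card S * \<bar>\<gamma> c\<bar> \<ge> 1/2\<close> keeps the form uniformly positive definite,
  so a multiple of \<open>(1 + |x|\<^sup>2) exp (- |x|\<^sup>2 / 8)\<close> dominates the derivative of the integrand.\<close>
lemma has_real_derivative_box_gauss_integral_uniform:
  fixes S :: "nat set" and T :: "real set" and \<alpha> \<gamma> \<mu> \<alpha>' \<gamma>' \<mu>' :: "real \<Rightarrow> real"
  assumes fin: "finite S" and T: "T \<in> sets borel" and \<delta>: "\<delta> > 0" and K0: "K \<ge> 0"
    and near: "\<And>c. \<bar>c\<bar> < \<delta> \<Longrightarrow>
      (\<alpha> has_real_derivative \<alpha>' c) (at c) \<and> (\<gamma> has_real_derivative \<gamma>' c) (at c)
      \<and> (\<mu> has_real_derivative \<mu>' c) (at c) \<and> \<alpha> c - real (card S) * \<bar>\<gamma> c\<bar> \<ge> 1/2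
      \<and> \<bar>\<alpha> c\<bar> \<le> K \<and> \<bar>\<gamma> c\<bar> \<le> K \<and> \<bar>\<mu> c\<bar> \<le> K \<and> \<bar>\<alpha>' c\<bar> \<le> K \<and> \<bar>\<gamma>' c\<bar> \<le> K \<and> \<bar>\<mu>' c\<bar> \<le> K"
  shows "((\<lambda>c. box_gauss_integral S T (\<alpha> c) (\<gamma> c) (\<mu> c)) has_real_derivative
     (\<integral>x. (\<Prod>i\<in>S. indicator T (x i)) * exp (- sym_qform S (\<alpha> 0) (\<gamma> 0) (\<mu> 0) x / 2)
       * (- sym_qform_deriv S (\<alpha> 0) (\<alpha>' 0) (\<gamma> 0) (\<gamma>' 0) (\<mu> 0) (\<mu>' 0) x / 2) \<partial>PiM_lborel S)) (at 0)"
proof -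
  define n where "n = real (card S)"
  define P where "P x = (\<Prod>i\<in>S. indicator T (x i) :: real)" for x :: "nat \<Rightarrow> real"
  define X where "X x = (\<Sum>i\<in>S. (x i)\<^sup>2)" for x :: "nat \<Rightarrow> real"
  define C1 where "C1 = K + K * n + 2 * K\<^sup>2 * (1 + n)"
  define C0 where "C0 = 2 * K\<^sup>2 * (1 + n) * n"
  define E where "E = exp (n * K\<^sup>2 / 4)"
  define f where "f c x = P x * exp (- sym_qform S (\<alpha> c) (\<gamma> c) (\<mu> c) x / 2)" for c x
  define f' where "f' c x = P x * exp (- sym_qform S (\<alpha> c) (\<gamma> c) (\<mu> c) x / 2)
            * (- sym_qform_deriv S (\<alpha> c) (\<alpha>' c) (\<gamma> c) (\<gamma>' c) (\<mu> c) (\<mu>' c) x / 2)" for c x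
  define G where "G x = E * exp (- X x / 8) * ((C1 * (2 * X x + 2 * n * K\<^sup>2) + C0) / 2)" for x
  have P: "0 \<le> P x" "P x \<le> 1" for x unfolding P_def by (rule prod_indicator_bounds)+
  have exp_le: "exp (- sym_qform S (\<alpha> c) (\<gamma> c) (\<mu> c) x / 2) \<le> E * exp (- X x / 8)"
    if c: "\<bar>c\<bar> < \<delta>" for c x
    unfolding E_def X_def n_def by (rule exp_neg_sym_qform_le[OF fin]) (use near[OF c] in auto)
  have deriv_le: "\<bar>sym_qform_deriv S (\<alpha> c) (\<alpha>' c) (\<gamma> c) (\<gamma>' c) (\<mu> c) (\<mu>' c) x\<bar>
      \<le> C1 * (2 * X x + 2 * n * K\<^sup>2) + C0" if c: "\<bar>c\<bar> < \<delta>" for c x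
    unfolding C1_def C0_def X_def n_def
    by (rule abs_sym_qform_deriv_le[OF fin K0]) (use near[OF c] in auto)
  have int8: "integrable (PiM_lborel S) (\<lambda>x. exp (- X x / 8))"
    "integrable (PiM_lborel S) (\<lambda>x. X x * exp (- X x / 8))"
    unfolding X_def by (rule integrable_PiM_exp_neg_sum_sq[OF fin])+
  have "((\<lambda>c. \<integral>x. f c x \<partial>PiM_lborel S) has_real_derivative (\<integral>x. f' 0 x \<partial>PiM_lborel S)) (at 0)"
  proof (rule has_real_derivative_integral[OF \<delta>])
    show "integrable (PiM_lborel S) (f c)" if c: "\<bar>c\<bar> < \<delta>" for c
    proof (rule Bochner_Integration.integrable_bound)
      show "integrable (PiM_lborel S) (\<lambda>x. E * exp (- X x / 8))" using int8 by simp
      show "f c \<in> borel_measurable (PiM_lborel S)"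
        unfolding f_def P_def sym_qform_def using T by measurable
      show "AE x in PiM_lborel S. norm (f c x) \<le> norm (E * exp (- X x / 8))"
      proof (rule AE_I2)
        fix x
        have "norm (f c x) \<le> 1 * (E * exp (- X x / 8))"
          unfolding f_def real_norm_def abs_mult using P[of x] exp_le[OF c, of x] by (intro mult_mono) auto
        then show "norm (f c x) \<le> norm (E * exp (- X x / 8))" unfolding E_def by simp
      qed
    qed
    show "((\<lambda>c. f c x) has_real_derivative f' c x) (at c)" if c: "\<bar>c\<bar> < \<delta>" for c x
      unfolding f_def f'_def using near[OF c]
      by (auto intro!: derivative_eq_intros has_real_derivative_sym_qform)
    show "\<bar>f' c x\<bar> \<le> G x" if c: "\<bar>c\<bar> < \<delta>" for c x
    proof -
      have "\<bar>f' c x\<bar> = P x * exp (- sym_qform S (\<alpha> c) (\<gamma> c) (\<mu> c) x / 2)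
          * (\<bar>sym_qform_deriv S (\<alpha> c) (\<alpha>' c) (\<gamma> c) (\<gamma>' c) (\<mu> c) (\<mu>' c) x\<bar> / 2)"
        unfolding f'_def using P by (simp add: abs_mult)
      also have "\<dots> \<le> 1 * (E * exp (- X x / 8)) * ((C1 * (2 * X x + 2 * n * K\<^sup>2) + C0) / 2)"
        using P exp_le[OF c] deriv_le[OF c] by (intro mult_mono) (auto simp: E_def)
      finally show ?thesis unfolding G_def by simp
    qed
    have "G = (\<lambda>x. (E * ((C1 * (2 * n * K\<^sup>2) + C0) / 2)) * exp (- X x / 8)
        + (E * C1) * (X x * exp (- X x / 8)))"
      unfolding G_def by (rule ext) (simp add: algebra_simps add_divide_distrib)
    then show "integrable (PiM_lborel S) G" using int8 by simp
    show "f' 0 \<in> borel_measurable (PiM_lborel S)"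
      unfolding f'_def P_def sym_qform_def sym_qform_deriv_def using T by measurable
  qed
  then show ?thesis unfolding box_gauss_integral_def f_def f'_def P_def .
qed

lemma has_real_derivative_box_gauss_integral:
  fixes S :: "nat set" and T :: "real set" and \<alpha> \<gamma> \<mu> \<alpha>' \<gamma>' \<mu>' :: "real \<Rightarrow> real"
  assumes fin: "finite S" and T: "T \<in> sets borel"
    and ev: "\<forall>\<^sub>F c in nhds 0. (\<alpha> has_real_derivative \<alpha>' c) (at c) \<and> (\<gamma> has_real_derivative \<gamma>' c) (at c)
               \<and> (\<mu> has_real_derivative \<mu>' c) (at c)"
    and cont: "isCont \<alpha>' 0" "isCont \<gamma>' 0" "isCont \<mu>' 0"
    and \<alpha>0: "\<alpha> 0 = 1" and \<gamma>0: "\<gamma> 0 = 0"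
  shows "((\<lambda>c. box_gauss_integral S T (\<alpha> c) (\<gamma> c) (\<mu> c)) has_real_derivative
     (\<integral>x. (\<Prod>i\<in>S. indicator T (x i)) * exp (- sym_qform S 1 0 (\<mu> 0) x / 2)
            * (- sym_qform_deriv S 1 (\<alpha>' 0) 0 (\<gamma>' 0) (\<mu> 0) (\<mu>' 0) x / 2) \<partial>PiM_lborel S)) (at 0)"
proof -
  define n where "n = real (card S)"
  define K where "K = 1 + \<bar>\<alpha> 0\<bar> + \<bar>\<alpha>' 0\<bar> + \<bar>\<gamma> 0\<bar> + \<bar>\<gamma>' 0\<bar> + \<bar>\<mu> 0\<bar> + \<bar>\<mu>' 0\<bar>"
  have "isCont \<alpha> 0" "isCont \<gamma> 0" "isCont \<mu> 0"
    using eventually_nhds_x_imp_x[OF ev] by (auto intro: DERIV_isCont)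
  then have "isCont (\<lambda>c. \<alpha> c - n * \<bar>\<gamma> c\<bar> - 1) 0"
    by (auto intro!: continuous_intros)
  then have "\<forall>\<^sub>F c in nhds 0. \<bar>\<alpha> c - n * \<bar>\<gamma> c\<bar> - 1\<bar> < 1/2"
    by (rule eventually_nhds_abs_less) (simp add: \<alpha>0 \<gamma>0)
  then have "\<forall>\<^sub>F c in nhds 0. \<alpha> c - n * \<bar>\<gamma> c\<bar> \<ge> 1/2"
    by (elim eventually_mono) (simp only: abs_less_iff, linarith)
  moreover have "\<forall>\<^sub>F c in nhds 0. \<bar>\<alpha> c\<bar> < K \<and> \<bar>\<gamma> c\<bar> < K \<and> \<bar>\<mu> c\<bar> < K
      \<and> \<bar>\<alpha>' c\<bar> < K \<and> \<bar>\<gamma>' c\<bar> < K \<and> \<bar>\<mu>' c\<bar> < K"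
    using \<open>isCont \<alpha> 0\<close> \<open>isCont \<gamma> 0\<close> \<open>isCont \<mu> 0\<close> cont
    by (intro eventually_conj eventually_nhds_abs_less) (auto simp: K_def)
  ultimately have "\<forall>\<^sub>F c in nhds 0. (\<alpha> has_real_derivative \<alpha>' c) (at c) \<and> (\<gamma> has_real_derivative \<gamma>' c) (at c)
      \<and> (\<mu> has_real_derivative \<mu>' c) (at c) \<and> \<alpha> c - n * \<bar>\<gamma> c\<bar> \<ge> 1/2
      \<and> \<bar>\<alpha> c\<bar> \<le> K \<and> \<bar>\<gamma> c\<bar> \<le> K \<and> \<bar>\<mu> c\<bar> \<le> K \<and> \<bar>\<alpha>' c\<bar> \<le> K \<and> \<bar>\<gamma>' c\<bar> \<le> K \<and> \<bar>\<mu>' c\<bar> \<le> K"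
    using ev by eventually_elim auto
  then obtain \<delta> where \<delta>: "\<delta> > 0" and near: "\<And>c. \<bar>c\<bar> < \<delta> \<Longrightarrow>
      (\<alpha> has_real_derivative \<alpha>' c) (at c) \<and> (\<gamma> has_real_derivative \<gamma>' c) (at c)
      \<and> (\<mu> has_real_derivative \<mu>' c) (at c) \<and> \<alpha> c - n * \<bar>\<gamma> c\<bar> \<ge> 1/2
      \<and> \<bar>\<alpha> c\<bar> \<le> K \<and> \<bar>\<gamma> c\<bar> \<le> K \<and> \<bar>\<mu> c\<bar> \<le> K \<and> \<bar>\<alpha>' c\<bar> \<le> K \<and> \<bar>\<gamma>' c\<bar> \<le> K \<and> \<bar>\<mu>' c\<bar> \<le> K"
    unfolding eventually_nhds_metric dist_real_def by auto
  have "K \<ge> 0" unfolding K_def by simp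
  from has_real_derivative_box_gauss_integral_uniform[OF fin T \<delta> this near[unfolded n_def]]
  show ?thesis unfolding \<alpha>0 \<gamma>0 .
qed

section \<open>Moments of truncated Gaussians\<close>

definition gauss_kernel :: "real set \<Rightarrow> real \<Rightarrow> bool \<Rightarrow> real \<Rightarrow> real" where
  "gauss_kernel T m b u = indicator T u * exp (- (u - m)\<^sup>2 / 2) * (if b then u - m else 1)"

lemma exp_neg_sq_div_2_eq: "exp (- (u - m)\<^sup>2 / 2) = sqrt (2 * pi) * normal_density m 1 u"
  unfolding normal_density_def by simp

lemma integrable_gauss_kernel:
  assumes T: "T \<in> sets borel"
  shows "integrable lborel (gauss_kernel T m b)"
proof -
  define k :: nat where "k = (if b then 1 else 0)"
  have eq: "gauss_kernel T m b
      = (\<lambda>u. indicator T u *\<^sub>R (sqrt (2 * pi) * (normal_density m 1 u * (u - m) ^ k)))"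
    unfolding gauss_kernel_def exp_neg_sq_div_2_eq k_def by (rule ext) auto
  have "integrable lborel (\<lambda>u. normal_density m 1 u * (u - m) ^ k)"
    by (rule integrable_normal_moment) simp
  then show ?thesis
    unfolding eq using T by (intro integrable_mult_indicator integrable_mult_right) auto
qed

definition gauss_kernel_prod :: "nat set \<Rightarrow> real set \<Rightarrow> real \<Rightarrow> nat set \<Rightarrow> (nat \<Rightarrow> real) \<Rightarrow> real" where
  "gauss_kernel_prod S T m F x = (\<Prod>l\<in>S. gauss_kernel T m (l \<in> F) (x l))"

lemma integrable_gauss_kernel_prod:
  assumes "finite S" "T \<in> sets borel"
  shows "integrable (PiM_lborel S) (gauss_kernel_prod S T m F)"
  unfolding gauss_kernel_prod_def
  by (rule product_sigma_finite.product_integrable_prod[OF product_sigma_finite_lborel assms(1)])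
    (rule integrable_gauss_kernel[OF assms(2)])

lemma integral_gauss_kernel_prod:
  assumes fin: "finite S" and F: "F \<subseteq> S" and T: "T \<in> sets borel"
  shows "integral\<^sup>L (PiM_lborel S) (gauss_kernel_prod S T m F)
    = integral\<^sup>L lborel (gauss_kernel T m True) ^ card F * integral\<^sup>L lborel (gauss_kernel T m False) ^ (card S - card F)"
proof -
  have "integral\<^sup>L (PiM_lborel S) (gauss_kernel_prod S T m F) = (\<Prod>l\<in>S. integral\<^sup>L lborel (gauss_kernel T m (l \<in> F)))"
    unfolding gauss_kernel_prod_def
    by (rule product_sigma_finite.product_integral_prod[OF product_sigma_finite_lborel fin])
      (rule integrable_gauss_kernel[OF T])
  also have "\<dots> = (\<Prod>l\<in>S. if l \<in> F then integral\<^sup>L lborel (gauss_kernel T m True)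
                                    else integral\<^sup>L lborel (gauss_kernel T m False))"
    by (intro prod.cong) auto
  also have "\<dots> = integral\<^sup>L lborel (gauss_kernel T m True) ^ card (S \<inter> {l. l \<in> F})
      * integral\<^sup>L lborel (gauss_kernel T m False) ^ card (S \<inter> - {l. l \<in> F})"
    using fin by (simp add: prod.If_cases)
  also have "S \<inter> {l. l \<in> F} = F" using F by auto
  also have "S \<inter> - {l. l \<in> F} = S - F" by auto
  also have "card (S - F) = card S - card F" using F fin by (simp add: card_Diff_subset finite_subset)
  finally show ?thesis .
qed

lemma gauss_kernel_prod_eq:
  fixes S :: "nat set" and x :: "nat \<Rightarrow> real"
  assumes fin: "finite S" and F: "F \<subseteq> S"
  shows "gauss_kernel_prod S T m F x
       = (\<Prod>i\<in>S. indicator T (x i)) * exp (- (\<Sum>i\<in>S. (x i - m)\<^sup>2) / 2) * (\<Prod>l\<in>F. x l - m)"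
proof -
  have "gauss_kernel_prod S T m F x
      = (\<Prod>l\<in>S. indicator T (x l)) * (\<Prod>l\<in>S. exp (- (x l - m)\<^sup>2 / 2)) * (\<Prod>l\<in>S. if l \<in> F then x l - m else 1)"
    unfolding gauss_kernel_prod_def gauss_kernel_def by (simp add: prod.distrib)
  also have "(\<Prod>l\<in>S. exp (- (x l - m)\<^sup>2 / 2)) = exp (- (\<Sum>i\<in>S. (x i - m)\<^sup>2) / 2)"
    using fin by (simp add: exp_sum[symmetric] sum_negf sum_divide_distrib)
  also have "(\<Prod>l\<in>S. if l \<in> F then x l - m else 1) = (\<Prod>l\<in>F. x l - m)"
    using fin F Int_absorb2[OF F] by (simp add: prod.If_cases Int_absorb1 Int_commute[of S] flip: Collect_mem_eq)
  finally show ?thesis .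
qed

lemma power2_sum_eq:
  fixes y :: "nat \<Rightarrow> real"
  assumes fin: "finite S"
  shows "(\<Sum>i\<in>S. y i)\<^sup>2 = (\<Sum>i\<in>S. (y i)\<^sup>2) + (\<Sum>i\<in>S. \<Sum>j\<in>S-{i}. y i * y j)"
proof -
  have "(\<Sum>i\<in>S. y i)\<^sup>2 = (\<Sum>i\<in>S. \<Sum>j\<in>S. y i * y j)"
    by (simp add: power2_eq_square sum_product)
  also have "\<dots> = (\<Sum>i\<in>S. (y i)\<^sup>2 + (\<Sum>j\<in>S-{i}. y i * y j))"
    using fin by (intro sum.cong) (simp_all add: sum.remove power2_eq_square)
  finally show ?thesis by (simp add: sum.distrib)
qed

text \<open>At the identity matrix and under \<open>a' + g' = 0\<close>, the squares in the derivative of the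
  quadratic form cancel, so only products of at most two centred coordinates remain.\<close>
lemma box_gauss_deriv_integrand_eq:
  fixes S :: "nat set" and x :: "nat \<Rightarrow> real"
  assumes fin: "finite S" and ag: "a' + g' = 0"
  shows "(\<Prod>i\<in>S. indicator T (x i)) * exp (- sym_qform S 1 0 m x / 2) * (- sym_qform_deriv S 1 a' 0 g' m m' x / 2)
    = - (g' / 2) * (\<Sum>i\<in>S. \<Sum>j\<in>S-{i}. gauss_kernel_prod S T m {i, j} x)
      + m' * (\<Sum>i\<in>S. gauss_kernel_prod S T m {i} x)"
proof -
  define P where "P = (\<Prod>i\<in>S. indicator T (x i) :: real)"
  define e where "e = exp (- (\<Sum>i\<in>S. (x i - m)\<^sup>2) / 2)"
  define y where "y i = x i - m" for i
  define D where "D = (\<Sum>i\<in>S. \<Sum>j\<in>S-{i}. y i * y j)"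
  define t where "t = (\<Sum>i\<in>S. y i)"
  define s where "s = (\<Sum>i\<in>S. (y i)\<^sup>2)"
  have pairs: "(\<Sum>i\<in>S. \<Sum>j\<in>S-{i}. gauss_kernel_prod S T m {i, j} x) = P * e * D"
    unfolding D_def sum_distrib_left y_def P_def e_def
    by (intro sum.cong refl) (auto simp: gauss_kernel_prod_eq[OF fin])
  have singles: "(\<Sum>i\<in>S. gauss_kernel_prod S T m {i} x) = P * e * t"
    unfolding t_def sum_distrib_left y_def P_def e_def
    by (intro sum.cong refl) (auto simp: gauss_kernel_prod_eq[OF fin])
  have exp_eq: "exp (- sym_qform S 1 0 m x / 2) = e" unfolding sym_qform_def e_def by simp
  have "sym_qform_deriv S 1 a' 0 g' m m' x = (a' + g') * s + g' * D - 2 * m' * t"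
    using power2_sum_eq[OF fin, of y] unfolding sym_qform_deriv_def y_def s_def t_def D_def
    by (simp add: algebra_simps)
  then have deriv_eq: "sym_qform_deriv S 1 a' 0 g' m m' x = g' * D - 2 * m' * t" using ag by simp
  show ?thesis unfolding pairs singles exp_eq deriv_eq P_def[symmetric] by (simp add: field_simps)
qed

lemma integral_box_gauss_deriv_integrand:
  fixes S :: "nat set" and T :: "real set" and m a' g' m' :: real
  assumes fin: "finite S" and T: "T \<in> sets borel" and ag: "a' + g' = 0"
  defines "M0 \<equiv> integral\<^sup>L lborel (gauss_kernel T m False)"
    and "M1 \<equiv> integral\<^sup>L lborel (gauss_kernel T m True)"
  shows "(\<integral>x. (\<Prod>i\<in>S. indicator T (x i)) * exp (- sym_qform S 1 0 m x / 2)
             * (- sym_qform_deriv S 1 a' 0 g' m m' x / 2) \<partial>PiM_lborel S)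
    = - (g' / 2) * (real (card S) * (real (card S) - 1) * M1\<^sup>2 * M0 ^ (card S - 2))
      + m' * (real (card S) * M1 * M0 ^ (card S - 1))"
proof -
  note int = integrable_gauss_kernel_prod[OF fin T]
  have pairs: "integral\<^sup>L (PiM_lborel S) (gauss_kernel_prod S T m {i, j}) = M1\<^sup>2 * M0 ^ (card S - 2)"
    if "i \<in> S" "j \<in> S - {i}" for i j
    using that integral_gauss_kernel_prod[OF fin _ T, of "{i, j}" m]
    by (simp add: M0_def M1_def power2_eq_square numeral_2_eq_2)
  have singles: "integral\<^sup>L (PiM_lborel S) (gauss_kernel_prod S T m {i}) = M1 * M0 ^ (card S - 1)"
    if "i \<in> S" for i
    using that integral_gauss_kernel_prod[OF fin _ T, of "{i}" m] by (simp add: M0_def M1_def)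
  have "(\<Sum>j\<in>S-{i}. integral\<^sup>L (PiM_lborel S) (gauss_kernel_prod S T m {i, j}))
      = (real (card S) - 1) * (M1\<^sup>2 * M0 ^ (card S - 2))" if i: "i \<in> S" for i
  proof -
    have "card (S - {i}) = card S - 1" "card S \<ge> 1" using fin i by (auto simp: card_gt_0_iff Suc_le_eq)
    moreover have "(\<Sum>j\<in>S-{i}. integral\<^sup>L (PiM_lborel S) (gauss_kernel_prod S T m {i, j}))
        = (\<Sum>j\<in>S-{i}. M1\<^sup>2 * M0 ^ (card S - 2))"
      using pairs[OF i] by (intro sum.cong) auto
    ultimately show ?thesis by (simp add: of_nat_diff)
  qed
  then have "(\<Sum>i\<in>S. \<Sum>j\<in>S-{i}. integral\<^sup>L (PiM_lborel S) (gauss_kernel_prod S T m {i, j}))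
      = real (card S) * (real (card S) - 1) * M1\<^sup>2 * M0 ^ (card S - 2)"
    by simp
  moreover have "(\<Sum>i\<in>S. integral\<^sup>L (PiM_lborel S) (gauss_kernel_prod S T m {i}))
      = real (card S) * M1 * M0 ^ (card S - 1)"
    by (simp add: singles)
  ultimately show ?thesis
    unfolding box_gauss_deriv_integrand_eq[OF fin ag] using int
    by (simp add: Bochner_Integration.integral_sum)
qed

lemma has_real_derivative_box_gauss_integral_moments:
  fixes S :: "nat set" and T :: "real set" and \<alpha> \<gamma> \<mu> \<alpha>' \<gamma>' \<mu>' :: "real \<Rightarrow> real"
  assumes fin: "finite S" and T: "T \<in> sets borel"
    and ev: "\<forall>\<^sub>F c in nhds 0. (\<alpha> has_real_derivative \<alpha>' c) (at c) \<and> (\<gamma> has_real_derivative \<gamma>' c) (at c)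
               \<and> (\<mu> has_real_derivative \<mu>' c) (at c)"
    and cont: "isCont \<alpha>' 0" "isCont \<gamma>' 0" "isCont \<mu>' 0"
    and \<alpha>0: "\<alpha> 0 = 1" and \<gamma>0: "\<gamma> 0 = 0" and \<alpha>\<gamma>': "\<alpha>' 0 + \<gamma>' 0 = 0"
  defines "M0 \<equiv> integral\<^sup>L lborel (gauss_kernel T (\<mu> 0) False)"
    and "M1 \<equiv> integral\<^sup>L lborel (gauss_kernel T (\<mu> 0) True)"
  shows "((\<lambda>c. box_gauss_integral S T (\<alpha> c) (\<gamma> c) (\<mu> c)) has_real_derivative
      - (\<gamma>' 0 / 2) * (real (card S) * (real (card S) - 1) * M1\<^sup>2 * M0 ^ (card S - 2))
      + \<mu>' 0 * (real (card S) * M1 * M0 ^ (card S - 1))) (at 0)"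
  using has_real_derivative_box_gauss_integral[OF fin T ev cont \<alpha>0 \<gamma>0]
  unfolding integral_box_gauss_deriv_integrand[OF fin T \<alpha>\<gamma>'] M0_def M1_def .

lemma integral_gauss_kernel_first_moment_symmetric:
  "integral\<^sup>L lborel (gauss_kernel {-L..L} 0 True) = 0"
proof -
  let ?f = "gauss_kernel {-L..L} 0 True"
  have "integral\<^sup>L lborel ?f = \<bar>-1::real\<bar> *\<^sub>R (\<integral>x. ?f (0 + (-1) * x) \<partial>lborel)"
    by (rule lborel_integral_real_affine) simp
  also have "(\<lambda>x. ?f (0 + (-1) * x)) = (\<lambda>x. - ?f x)"
    by (rule ext) (auto simp: gauss_kernel_def indicator_def)
  finally have "integral\<^sup>L lborel ?f = - integral\<^sup>L lborel ?f" by simp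
  then show ?thesis by simp
qed

lemma einterval_minf_Iio: "einterval (-\<infinity>) (ereal t) = {..<t}"
  by (auto simp: einterval_def)

lemma integral_gauss_kernel_first_moment_halfline:
  "integral\<^sup>L lborel (gauss_kernel {..<t} m True) = - exp (- (t - m)\<^sup>2 / 2)"
proof -
  define f where "f x = exp (- (x - m)\<^sup>2 / 2) * (x - m)" for x :: real
  define F where "F x = - exp (- (x - m)\<^sup>2 / 2)" for x :: real
  have fint: "integrable lborel f"
    using integrable_gauss_kernel[of UNIV m True] unfolding gauss_kernel_def f_def by simp
  have "(LBINT x=-\<infinity>..ereal t. f x) = F t - 0"
  proof (rule interval_integral_FTC_integrable)
    show "-\<infinity> < ereal t" by simp
    show "(F has_vector_derivative f x) (at x)" for x
      unfolding F_def f_def has_real_derivative_iff_has_vector_derivative[symmetric]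
      by (auto intro!: derivative_eq_intros simp: field_simps)
    show "isCont f x" for x unfolding f_def by (auto intro!: continuous_intros)
    show "set_integrable lborel (einterval (-\<infinity>) (ereal t)) f"
      unfolding set_integrable_def using fint by (intro integrable_mult_indicator) auto
    have "(F \<longlongrightarrow> 0) at_bot" unfolding F_def by real_asymp
    then show "((F \<circ> real_of_ereal) \<longlongrightarrow> 0) (at_right (-\<infinity>))"
      by (simp add: ereal_tendsto_simps1)
    have "(F \<longlongrightarrow> F t) (at_left t)" unfolding F_def
      by (auto intro!: tendsto_intros)
    then show "((F \<circ> real_of_ereal) \<longlongrightarrow> F t) (at_left (ereal t))"
      by (simp add: ereal_tendsto_simps1)
  qed
  moreover have "(LBINT x=-\<infinity>..ereal t. f x) = integral\<^sup>L lborel (gauss_kernel {..<t} m True)"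
    unfolding interval_lebesgue_integral_def set_lebesgue_integral_def einterval_minf_Iio gauss_kernel_def f_def
    by (simp add: mult_ac)
  ultimately show ?thesis unfolding F_def by simp
qed

lemma integral_gauss_kernel_halfline:
  "integral\<^sup>L lborel (gauss_kernel {..<t} m False) = sqrt (2 * pi) * std_normal_cdf (t - m)"
proof -
  let ?f = "gauss_kernel {..<t} m False"
  have "integral\<^sup>L lborel ?f = \<bar>1::real\<bar> *\<^sub>R (\<integral>x. ?f (m + 1 * x) \<partial>lborel)"
    by (rule lborel_integral_real_affine) simp
  also have "(\<lambda>x. ?f (m + 1 * x)) = (\<lambda>x. sqrt (2 * pi) * (indicator {..<t - m} x * std_normal_density x))"
    by (rule ext) (auto simp: gauss_kernel_def indicator_def std_normal_density_def)
  also have "(\<integral>x. sqrt (2 * pi) * (indicator {..<t - m} x * std_normal_density x) \<partial>lborel)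
      = sqrt (2 * pi) * (\<integral>x. indicator {..<t - m} x * std_normal_density x \<partial>lborel)"
    by simp
  also have "(\<integral>x. indicator {..<t - m} x * std_normal_density x \<partial>lborel)
      = (\<integral>x. indicator {..t - m} x * std_normal_density x \<partial>lborel)"
  proof (rule integral_cong_AE)
    show "AE x in lborel. indicator {..<t - m} x * std_normal_density x = indicator {..t - m} x * std_normal_density x"
      using AE_lborel_singleton[of "t - m"] by eventually_elim (auto simp: indicator_def)
  qed auto
  also have "\<dots> = std_normal_cdf (t - m)"
    unfolding std_normal_cdf_def set_lebesgue_integral_def by simp
  finally show ?thesis by simp
qed

lemma std_normal_cdf_pos: "std_normal_cdf x > 0"
proof -
  define c0 where "c0 = (1 / sqrt (2 * pi)) * exp (- (\<bar>x\<bar> + 1)\<^sup>2 / 2)"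
  have c0: "c0 > 0" unfolding c0_def by simp
  have int1: "integrable lborel (\<lambda>s. indicator {..x} s * std_normal_density s)"
  proof -
    have "integrable lborel (std_normal_density)" using integrable_normal_density[where \<mu>=0 and \<sigma>=1] by simp
    then have "integrable lborel (\<lambda>s. indicator {..x} s *\<^sub>R std_normal_density s)"
      by (intro integrable_mult_indicator) auto
    then show ?thesis by simp
  qed
  have int2: "integrable lborel (\<lambda>s. indicator {x - 1..x} s * c0)"
    by (intro integrable_mult_left integrable_real_indicator) auto
  have le: "indicator {x - 1..x} s * c0 \<le> indicator {..x} s * std_normal_density s" for s
  proof (cases "s \<in> {x - 1..x}")
    case True
    then have "\<bar>s\<bar> \<le> \<bar>x\<bar> + 1" by auto
    then have "s\<^sup>2 \<le> (\<bar>x\<bar> + 1)\<^sup>2" using power_mono[of "\<bar>s\<bar>" "\<bar>x\<bar> + 1" 2] by simp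
    then have "exp (- (\<bar>x\<bar> + 1)\<^sup>2 / 2) \<le> exp (- s\<^sup>2 / 2)" by simp
    then have "c0 \<le> std_normal_density s" unfolding c0_def std_normal_density_def
      by (intro mult_left_mono) auto
    then show ?thesis using True by (simp add: indicator_def)
  next
    case False then show ?thesis by (simp add: indicator_def)
  qed
  have "(\<integral>s. indicator {x - 1..x} s * c0 \<partial>lborel) = c0"
    by (simp add: measure_lborel_Icc)
  moreover have "(\<integral>s. indicator {x - 1..x} s * c0 \<partial>lborel) \<le> (\<integral>s. indicator {..x} s * std_normal_density s \<partial>lborel)"
    by (rule integral_mono[OF int2 int1 le])
  ultimately show ?thesis unfolding std_normal_cdf_def set_lebesgue_integral_def using c0 by simp
qed

section \<open>The sign recovery probabilities\<close>

lemma indicator_box_eq_prod: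
  fixes S :: "nat set" and T :: "real set" and x :: "nat \<Rightarrow> real"
  assumes "finite S"
  shows "(indicator {x. \<forall>i\<in>S. x i \<in> T} x :: real) = (\<Prod>i\<in>S. indicator T (x i))"
  using assms by (auto simp: indicator_def prod_zero)

lemma compsym_qform:
  fixes S :: "nat set" and x mu :: "nat \<Rightarrow> real"
  assumes fin: "finite S" and mu: "\<And>i. i \<in> S \<Longrightarrow> mu i = m"
  shows "(\<Sum>i\<in>S. \<Sum>j\<in>S. (x i - mu i) * compsym a g i j * (x j - mu j)) = sym_qform S a g m x"
proof -
  have "(\<Sum>i\<in>S. \<Sum>j\<in>S. (x i - mu i) * compsym a g i j * (x j - mu j))
      = (\<Sum>i\<in>S. \<Sum>j\<in>S. (if i = j then a * (x i - m)\<^sup>2 else 0) + g * ((x i - m) * (x j - m)))"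
    using mu by (intro sum.cong refl) (auto simp: compsym_def power2_eq_square algebra_simps)
  also have "\<dots> = a * (\<Sum>i\<in>S. (x i - m)\<^sup>2) + g * (\<Sum>i\<in>S. (x i - m))\<^sup>2"
    using fin by (simp add: sum.distrib sum_distrib_left sum_distrib_right power2_eq_square mult_ac)
  finally show ?thesis unfolding sym_qform_def .
qed

lemma mvn_prob_box_eq:
  fixes S :: "nat set" and T :: "real set" and mu :: "nat \<Rightarrow> real"
  assumes fin: "finite S" and mu: "\<And>i. i \<in> S \<Longrightarrow> mu i = m"
    and Sg: "\<And>i j. i \<in> S \<Longrightarrow> j \<in> S \<Longrightarrow> minv S Sg i j = compsym a g i j"
  shows "mvn_prob S mu Sg {x. \<forall>i\<in>S. x i \<in> T}
    = box_gauss_integral S T a g m / sqrt ((2 * pi) ^ card S * mdet S Sg)"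
proof -
  have "(\<Sum>i\<in>S. \<Sum>j\<in>S. (x i - mu i) * minv S Sg i j * (x j - mu j)) = sym_qform S a g m x" for x
  proof -
    have "(\<Sum>i\<in>S. \<Sum>j\<in>S. (x i - mu i) * minv S Sg i j * (x j - mu j))
        = (\<Sum>i\<in>S. \<Sum>j\<in>S. (x i - mu i) * compsym a g i j * (x j - mu j))"
      using Sg by (intro sum.cong refl) auto
    then show ?thesis using compsym_qform[OF fin mu] by simp
  qed
  then have "mvn_prob S mu Sg {x. \<forall>i\<in>S. x i \<in> T}
      = (\<integral>x. (\<Prod>i\<in>S. indicator T (x i)) * exp (- sym_qform S a g m x / 2)
             / sqrt ((2 * pi) ^ card S * mdet S Sg) \<partial>PiM_lborel S)"
    unfolding mvn_prob_def set_lebesgue_integral_def mvn_density_def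
    by (intro Bochner_Integration.integral_cong refl) (simp add: indicator_box_eq_prod[OF fin])
  then show ?thesis unfolding box_gauss_integral_def by simp
qed

lemma cs_corr_inverse:
  assumes "finite S" "1 - c \<noteq> 0" "1 - c + real (card S) * c \<noteq> 0"
  shows "is_inverse_on S (cs_corr c) (compsym (1 / (1 - c)) (- c / ((1 - c) * (1 - c + real (card S) * c))))"
  unfolding cs_corr_eq_compsym using assms by (rule compsym_inverse)

lemma sum_minv_cs_corr_row:
  assumes fin: "finite S" and c: "1 - c \<noteq> 0" "1 - c + real (card S) * c \<noteq> 0" and i: "i \<in> S"
  shows "(\<Sum>j\<in>S. minv S (cs_corr c) i j) = 1 / (1 - c + real (card S) * c)"
proof -
  have "(\<Sum>j\<in>S. minv S (cs_corr c) i j)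
      = (\<Sum>j\<in>S. compsym (1 / (1 - c)) (- c / ((1 - c) * (1 - c + real (card S) * c))) i j)"
    using minv_eq[OF fin cs_corr_inverse[OF fin c] i] by (intro sum.cong) auto
  also have "\<dots> = 1 / (1 - c + real (card S) * c)"
  proof -
    define a where "a = 1 - c"
    define d where "d = 1 - c + real (card S) * c"
    have a: "a \<noteq> 0" and d: "d \<noteq> 0" and da: "d - real (card S) * c = a"
      using c unfolding a_def d_def by simp_all
    have "1 / a + real (card S) * (- c / (a * d)) = (d - real (card S) * c) / (a * d)"
      using a d by (simp add: field_simps)
    also have "\<dots> = 1 / d" using a unfolding da by simp
    finally have "1 / a + real (card S) * (- c / (a * d)) = 1 / d" .
    then show ?thesis unfolding sum_compsym_row[OF fin i] a_def d_def .
  qed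
  finally show ?thesis .
qed

lemma PS_eq_box_gauss_integral:
  assumes fin: "finite A" and beta: "beta > 0" and c: "1 - c \<noteq> 0" "1 - c + real (card A) * c \<noteq> 0"
  shows "PS n lam c A (\<lambda>_. beta) =
    box_gauss_integral A {..<sqrt (real n) * beta} (1 - c) c (lam * sqrt (real n) / (1 - c + real (card A) * c))
    / sqrt ((2 * pi) ^ card A * mdet A (compsym (1 / (1 - c)) (- c / ((1 - c) * (1 - c + real (card A) * c)))))"
proof -
  have "PS n lam c A (\<lambda>_. beta) = mvn_prob A (\<lambda>i. lam * sqrt (real n) * (\<Sum>j\<in>A. minv A (cs_corr c) i j))
      (minv A (cs_corr c)) {u. \<forall>i\<in>A. u i \<in> {..<sqrt (real n) * beta}}"
    unfolding PS_def Let_def using beta by simp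
  also have "\<dots> = box_gauss_integral A {..<sqrt (real n) * beta} (1 - c) c (lam * sqrt (real n) / (1 - c + real (card A) * c))
      / sqrt ((2 * pi) ^ card A * mdet A (minv A (cs_corr c)))"
    using sum_minv_cs_corr_row[OF fin c] minv_minv[OF fin cs_corr_inverse[OF fin c]]
    by (intro mvn_prob_box_eq[OF fin]) (simp_all add: cs_corr_eq_compsym)
  also have "mdet A (minv A (cs_corr c))
      = mdet A (compsym (1 / (1 - c)) (- c / ((1 - c) * (1 - c + real (card A) * c))))"
    using minv_eq[OF fin cs_corr_inverse[OF fin c]] by (rule mdet_cong)
  finally show ?thesis .
qed

text \<open>For \<open>k \<le> 1\<close> both sides vanish, although \<open>k - 2\<close> and \<open>k - 1\<close> are truncated.\<close>
lemma PS_derivative_factorization: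
  fixes k :: nat and e B L :: real
  shows "- (1 / 2) * (real k * (real k - 1) * (- e)\<^sup>2 * B ^ (k - 2))
      + - L * (real k - 1) * (real k * - e * B ^ (k - 1))
    = real k * (real k - 1) * e * B ^ (k - 2) * (L * B - e / 2)"
proof (cases "k \<ge> 2")
  case True
  then have "B ^ (k - 1) = B * B ^ (k - 2)" by (metis Suc_diff_Suc Suc_1 less_le_trans lessI power_Suc)
  then show ?thesis by (simp add: power2_eq_square algebra_simps)
next
  case False
  then consider "k = 0" | "k = 1" by linarith
  then show ?thesis by cases simp_all
qed

lemma has_real_derivative_PS:
  fixes A :: "nat set" and n :: nat and lam beta :: real
  assumes fin: "finite A" and beta: "beta > 0"
  defines "k \<equiv> card A" and "L \<equiv> lam * sqrt (real n)"
  defines "e \<equiv> exp (- (sqrt (real n) * (beta - lam))\<^sup>2 / 2)"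
    and "B \<equiv> sqrt (2 * pi) * std_normal_cdf (sqrt (real n) * (beta - lam))"
  shows "((\<lambda>c. PS n lam c A (\<lambda>_. beta)) has_real_derivative
      real k * (real k - 1) * e * B ^ (k - 2) * (L * B - e / 2) / sqrt ((2 * pi) ^ k)) (at 0)"
proof -
  define d where "d c = 1 - c + real k * c" for c
  define T where "T = {..<sqrt (real n) * beta}"
  define J where "J c = box_gauss_integral A T (1 - c) c (L / d c)" for c
  have near: "\<forall>\<^sub>F c in nhds 0. 1 - c \<noteq> 0 \<and> d c \<noteq> 0"
    unfolding d_def by (intro eventually_conj eventually_nhds_nonzero) (auto intro!: continuous_intros)
  have T_shift: "sqrt (real n) * beta - L = sqrt (real n) * (beta - lam)"
    unfolding L_def by (simp add: algebra_simps)
  have "(J has_real_derivative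
      - (1 / 2) * (real k * (real k - 1) * (integral\<^sup>L lborel (gauss_kernel T (L / d 0) True))\<^sup>2
                   * integral\<^sup>L lborel (gauss_kernel T (L / d 0) False) ^ (k - 2))
      + - L * (real k - 1) / (d 0)\<^sup>2 * (real k * integral\<^sup>L lborel (gauss_kernel T (L / d 0) True)
                   * integral\<^sup>L lborel (gauss_kernel T (L / d 0) False) ^ (k - 1))) (at 0)"
    unfolding J_def k_def
  proof (rule has_real_derivative_box_gauss_integral_moments[where \<alpha>' = "\<lambda>_. -1" and \<gamma>' = "\<lambda>_. 1"])
    show "\<forall>\<^sub>F c in nhds 0. ((\<lambda>c. 1 - c) has_real_derivative - 1) (at c) \<and> ((\<lambda>c. c) has_real_derivative 1) (at c)
        \<and> ((\<lambda>c. L / d c) has_real_derivative - L * (real (card A) - 1) / (d c)\<^sup>2) (at c)"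
      using near by eventually_elim
        (auto intro!: derivative_eq_intros simp: d_def k_def power2_eq_square field_simps)
  qed (auto simp: fin T_def d_def intro!: continuous_intros)
  also have "integral\<^sup>L lborel (gauss_kernel T (L / d 0) True) = - e"
    unfolding T_def d_def e_def integral_gauss_kernel_first_moment_halfline by (simp add: T_shift)
  also have "integral\<^sup>L lborel (gauss_kernel T (L / d 0) False) = B"
    unfolding T_def d_def B_def integral_gauss_kernel_halfline by (simp add: T_shift)
  also have "- (1 / 2) * (real k * (real k - 1) * (- e)\<^sup>2 * B ^ (k - 2))
      + - L * (real k - 1) / (d 0)\<^sup>2 * (real k * - e * B ^ (k - 1))
      = real k * (real k - 1) * e * B ^ (k - 2) * (L * B - e / 2)"
    using PS_derivative_factorization[of k e B L] by (simp add: d_def)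
  finally have dJ: "(J has_real_derivative real k * (real k - 1) * e * B ^ (k - 2) * (L * B - e / 2)) (at 0)" .
  have "((\<lambda>c. J c / sqrt ((2 * pi) ^ card A * mdet A (compsym (1 / (1 - c)) (- c / ((1 - c) * d c)))))
      has_real_derivative real k * (real k - 1) * e * B ^ (k - 2) * (L * B - e / 2) / sqrt ((2 * pi) ^ card A)) (at 0)"
    by (rule has_real_derivative_divide_sqrt_mdet_compsym[OF fin dJ, where a' = 1])
      (auto intro!: derivative_eq_intros simp: d_def)
  moreover have "\<forall>\<^sub>F c in nhds 0. PS n lam c A (\<lambda>_. beta)
      = J c / sqrt ((2 * pi) ^ card A * mdet A (compsym (1 / (1 - c)) (- c / ((1 - c) * d c))))"
    using near by eventually_elim (simp add: J_def T_def L_def d_def k_def PS_eq_box_gauss_integral[OF fin beta])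
  ultimately show ?thesis unfolding k_def by (simp add: DERIV_cong_ev)
qed

lemma sum_cs_corr_minv_cs_corr:
  assumes fin: "finite A" and i: "i \<notin> A" and c: "1 - c \<noteq> 0" "1 - c + real (card A) * c \<noteq> 0"
  shows "(\<Sum>a\<in>A. \<Sum>b\<in>A. cs_corr c i a * minv A (cs_corr c) a b * t)
    = c * t * real (card A) / (1 - c + real (card A) * c)"
proof -
  have "(\<Sum>a\<in>A. \<Sum>b\<in>A. cs_corr c i a * minv A (cs_corr c) a b * t)
      = (\<Sum>a\<in>A. c * t * (\<Sum>b\<in>A. minv A (cs_corr c) a b))"
    using i by (intro sum.cong refl) (auto simp: cs_corr_def sum_distrib_left mult_ac)
  also have "\<dots> = (\<Sum>a\<in>A. c * t / (1 - c + real (card A) * c))"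
    using sum_minv_cs_corr_row[OF fin c] by (intro sum.cong) auto
  finally show ?thesis by simp
qed

lemma is_inverse_on_cong:
  assumes "\<And>i j. i \<in> S \<Longrightarrow> j \<in> S \<Longrightarrow> M i j = M' i j" "is_inverse_on S M' N"
  shows "is_inverse_on S M N"
proof -
  have "(\<Sum>l\<in>S. M i l * N l j) = (\<Sum>l\<in>S. M' i l * N l j)"
    "(\<Sum>l\<in>S. N i l * M l j) = (\<Sum>l\<in>S. N i l * M' l j)" if "i \<in> S" "j \<in> S" for i j
    using assms(1) that by (auto intro!: sum.cong)
  then show ?thesis using assms(2) unfolding is_inverse_on_def by simp
qed

lemma cs_corr_schur_complement:
  assumes fin: "finite A" and ij: "i \<notin> A" "j \<notin> A"
    and c: "1 - c \<noteq> 0" "1 - c + real (card A) * c \<noteq> 0"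
  shows "cs_corr c i j - (\<Sum>a\<in>A. \<Sum>b\<in>A. cs_corr c i a * minv A (cs_corr c) a b * cs_corr c b j)
    = compsym (1 - c) (c * (1 - c) / (1 - c + real (card A) * c)) i j"
proof -
  have "(\<Sum>a\<in>A. \<Sum>b\<in>A. cs_corr c i a * minv A (cs_corr c) a b * cs_corr c b j)
      = c * c * real (card A) / (1 - c + real (card A) * c)"
    using ij(2) by (subst sum_cs_corr_minv_cs_corr[OF fin ij(1) c, symmetric])
      (auto intro!: sum.cong simp: cs_corr_def)
  then show ?thesis using c unfolding cs_corr_def compsym_def by (simp add: field_simps)
qed

lemma compsym_schur_complement_inverse:
  assumes fin: "finite I" and c: "1 - c \<noteq> 0" "d \<noteq> 0" "q \<noteq> 0" and dq: "d + real (card I) * c = q"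
  shows "is_inverse_on I (compsym (1 - c) (c * (1 - c) / d)) (compsym (1 / (1 - c)) (- c / ((1 - c) * q)))"
proof -
  have "1 - c + real (card I) * (c * (1 - c) / d) = (1 - c) * (d + real (card I) * c) / d"
    using c by (simp add: field_simps)
  then have a_plus: "1 - c + real (card I) * (c * (1 - c) / d) = (1 - c) * q / d"
    unfolding dq .
  have "is_inverse_on I (compsym (1 - c) (c * (1 - c) / d))
      (compsym (1 / (1 - c)) (- (c * (1 - c) / d) / ((1 - c) * (1 - c + real (card I) * (c * (1 - c) / d)))))"
    by (rule compsym_inverse[OF fin c(1)]) (unfold a_plus, use c in simp)
  moreover have "- (c * x / d) / (x * (x * q / d)) = - c / (x * q)" if "x \<noteq> 0" for x
    using that c by (simp add: field_simps)
  ultimately show ?thesis unfolding a_plus using c(1) by simp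
qed

lemma PI_eq_box_gauss_integral:
  fixes A :: "nat set" and p n :: nat and lam c :: real
  assumes Asub: "A \<subseteq> {1..p}"
    and c: "1 - c \<noteq> 0" "1 - c + real (card A) * c \<noteq> 0" and cp: "1 - c + real p * c \<noteq> 0"
  shows "PI n lam c p A (\<lambda>_. 1) =
    box_gauss_integral ({1..p} - A) {- (lam * sqrt (real n))..lam * sqrt (real n)}
      (1 / (1 - c)) (- c / ((1 - c) * (1 - c + real p * c)))
      (lam * sqrt (real n) * c * real (card A) / (1 - c + real (card A) * c))
    / sqrt ((2 * pi) ^ card ({1..p} - A)
        * mdet ({1..p} - A) (compsym (1 - c) (c * (1 - c) / (1 - c + real (card A) * c))))"
proof -
  define I where "I = {1..p} - A"
  define L where "L = lam * sqrt (real n)"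
  define d where "d = 1 - c + real (card A) * c"
  define Cov where "Cov i j = cs_corr c i j
      - (\<Sum>a\<in>A. \<Sum>b\<in>A. cs_corr c i a * minv A (cs_corr c) a b * cs_corr c b j)" for i j
  have finA: "finite A" using Asub finite_subset by blast
  have finI: "finite I" unfolding I_def by simp
  have notA: "i \<notin> A" if "i \<in> I" for i using that unfolding I_def by auto
  have Cov: "Cov i j = compsym (1 - c) (c * (1 - c) / d) i j" if "i \<in> I" "j \<in> I" for i j
    unfolding Cov_def d_def using cs_corr_schur_complement[OF finA notA notA c] that .
  have "d + real (card I) * c = 1 - c + real p * c"
    using Asub finA card_mono[of "{1..p}" A] unfolding I_def d_def
    by (simp add: card_Diff_subset of_nat_diff algebra_simps)
  from compsym_schur_complement_inverse[OF finI c(1) c(2)[folded d_def] cp this]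
  have inv: "is_inverse_on I Cov (compsym (1 / (1 - c)) (- c / ((1 - c) * (1 - c + real p * c))))"
    using Cov by (intro is_inverse_on_cong[of I Cov]) simp_all
  have "{v. \<forall>i\<in>I. \<bar>v i\<bar> \<le> L} = {v. \<forall>i\<in>I. v i \<in> {- L..L}}" by (auto simp: abs_le_iff)
  then have "PI n lam c p A (\<lambda>_. 1)
      = mvn_prob I (\<lambda>i. L * (\<Sum>a\<in>A. \<Sum>b\<in>A. cs_corr c i a * minv A (cs_corr c) a b * 1)) Cov
          {v. \<forall>i\<in>I. v i \<in> {- L..L}}"
    unfolding PI_def Let_def I_def[symmetric] L_def[symmetric] Cov_def by simp
  also have "\<dots> = box_gauss_integral I {- L..L} (1 / (1 - c)) (- c / ((1 - c) * (1 - c + real p * c)))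
      (L * c * real (card A) / d) / sqrt ((2 * pi) ^ card I * mdet I Cov)"
    using sum_cs_corr_minv_cs_corr[OF finA notA c, where t = 1] minv_eq[OF finI inv]
    by (intro mvn_prob_box_eq[OF finI]) (simp_all add: d_def)
  also have "mdet I Cov = mdet I (compsym (1 - c) (c * (1 - c) / d))"
    using Cov by (rule mdet_cong)
  finally show ?thesis unfolding I_def L_def d_def .
qed

lemma has_real_derivative_PI:
  fixes A :: "nat set" and p n :: nat and lam :: real
  assumes Asub: "A \<subseteq> {1..p}"
  shows "((\<lambda>c. PI n lam c p A (\<lambda>_. 1)) has_real_derivative 0) (at 0)"
proof -
  define I where "I = {1..p} - A"
  define k where "k = card A"
  define L where "L = lam * sqrt (real n)"
  define T where "T = {- L..L}"
  define d where "d c = 1 - c + real k * c" for c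
  define q where "q c = (1 - c) * (1 - c + real p * c)" for c
  define q' where "q' c = (1 - c) * (real p - 1) - (1 - c + real p * c)" for c
  define \<gamma>' where "\<gamma>' c = (c * q' c - q c) / (q c)\<^sup>2" for c
  define J where "J c = box_gauss_integral I T (1 / (1 - c)) (- c / q c) (L * c * real k / d c)" for c
  have finI: "finite I" unfolding I_def by simp
  have near: "\<forall>\<^sub>F c in nhds 0. 1 - c \<noteq> 0 \<and> d c \<noteq> 0 \<and> 1 - c + real p * c \<noteq> 0 \<and> q c \<noteq> 0"
    unfolding d_def q_def by (intro eventually_conj eventually_nhds_nonzero) (auto intro!: continuous_intros)
  have \<gamma>': "((\<lambda>c. - c / q c) has_real_derivative \<gamma>' c) (at c)" if "q c \<noteq> 0" for c
  proof -
    have "(q has_real_derivative q' c) (at c)"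
      unfolding q_def q'_def by (auto intro!: derivative_eq_intros simp: algebra_simps)
    from DERIV_divide[OF DERIV_minus[OF DERIV_ident] this that] show ?thesis
      unfolding \<gamma>'_def by (simp add: power2_eq_square algebra_simps)
  qed
  have "(J has_real_derivative
      - (\<gamma>' 0 / 2) * (real (card I) * (real (card I) - 1)
          * (integral\<^sup>L lborel (gauss_kernel T (L * 0 * real k / d 0) True))\<^sup>2
          * integral\<^sup>L lborel (gauss_kernel T (L * 0 * real k / d 0) False) ^ (card I - 2))
      + L * real k / (d 0)\<^sup>2 * (real (card I) * integral\<^sup>L lborel (gauss_kernel T (L * 0 * real k / d 0) True)
          * integral\<^sup>L lborel (gauss_kernel T (L * 0 * real k / d 0) False) ^ (card I - 1))) (at 0)"
    unfolding J_def
  proof (rule has_real_derivative_box_gauss_integral_moments[where \<alpha>' = "\<lambda>c. 1 / (1 - c)\<^sup>2"])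
    show "\<forall>\<^sub>F c in nhds 0. ((\<lambda>c. 1 / (1 - c)) has_real_derivative 1 / (1 - c)\<^sup>2) (at c)
        \<and> ((\<lambda>c. - c / q c) has_real_derivative \<gamma>' c) (at c)
        \<and> ((\<lambda>c. L * c * real k / d c) has_real_derivative L * real k / (d c)\<^sup>2) (at c)"
      using near by eventually_elim
        (intro conjI \<gamma>', auto intro!: derivative_eq_intros simp: d_def power2_eq_square field_simps)
  qed (auto simp: finI T_def q_def q'_def d_def \<gamma>'_def intro!: continuous_intros)
  then have dJ: "(J has_real_derivative 0) (at 0)"
    unfolding T_def by (simp add: integral_gauss_kernel_first_moment_symmetric)
  have "((\<lambda>c. J c / sqrt ((2 * pi) ^ card I * mdet I (compsym (1 - c) (c * (1 - c) / d c))))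
      has_real_derivative 0 / sqrt ((2 * pi) ^ card I)) (at 0)"
    by (rule has_real_derivative_divide_sqrt_mdet_compsym[OF finI dJ, where a' = "-1"])
      (auto intro!: derivative_eq_intros simp: d_def)
  moreover have "\<forall>\<^sub>F c in nhds 0. PI n lam c p A (\<lambda>_. 1)
      = J c / sqrt ((2 * pi) ^ card I * mdet I (compsym (1 - c) (c * (1 - c) / d c)))"
    using near by eventually_elim
      (simp add: J_def I_def T_def L_def d_def k_def q_def PI_eq_box_gauss_integral[OF Asub])
  ultimately show ?thesis by (simp add: DERIV_cong_ev)
qed

lemma half_gauss_le_of_density_cdf_ratio_le:
  assumes "std_normal_density \<tau> / std_normal_cdf \<tau> \<le> 2 * L"
  shows "exp (- \<tau>\<^sup>2 / 2) / 2 \<le> L * (sqrt (2 * pi) * std_normal_cdf \<tau>)"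
proof -
  have "std_normal_density \<tau> \<le> 2 * L * std_normal_cdf \<tau>"
    using assms std_normal_cdf_pos[of \<tau>] by (simp add: divide_le_eq)
  then show ?thesis unfolding std_normal_density_def by (simp add: divide_le_eq mult_ac)
qed

theorem lemma3:
  fixes n p k :: nat and A :: "nat set" and beta lam :: real
  assumes "n \<ge> 1" and "1 \<le> k" and "k < p"
    and "A \<subseteq> {1..p}" and "card A = k"
    and "beta > 0" and "lam > 0"
  shows "((\<lambda>c. PI n lam c p A (\<lambda>_. 1)) has_real_derivative 0) (at 0)
    \<and> (2 * (lam * sqrt (real n)) \<ge>
          std_normal_density (sqrt (real n) * (beta - lam))
          / std_normal_cdf (sqrt (real n) * (beta - lam))
       \<longrightarrow> (\<exists>D. ((\<lambda>c. PS n lam c A (\<lambda>_. beta)) has_real_derivative D) (at 0) \<and> D \<ge> 0))"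
proof (intro conjI impI)
  show "((\<lambda>c. PI n lam c p A (\<lambda>_. 1)) has_real_derivative 0) (at 0)"
    by (rule has_real_derivative_PI[OF assms(4)])
  define \<tau> where "\<tau> = sqrt (real n) * (beta - lam)"
  define e where "e = exp (- \<tau>\<^sup>2 / 2)"
  define B where "B = sqrt (2 * pi) * std_normal_cdf \<tau>"
  assume "2 * (lam * sqrt (real n)) \<ge> std_normal_density \<tau> / std_normal_cdf \<tau>"
  then have "e / 2 \<le> lam * sqrt (real n) * B"
    unfolding e_def B_def by (rule half_gauss_le_of_density_cdf_ratio_le)
  moreover have "e > 0" "B > 0" unfolding e_def B_def using std_normal_cdf_pos by simp_all
  ultimately have nonneg: "real k * (real k - 1) * e * B ^ (k - 2) * (lam * sqrt (real n) * B - e / 2)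
      / sqrt ((2 * pi) ^ k) \<ge> 0"
    using assms(2) by simp
  have "finite A" using assms(4) finite_subset by blast
  from has_real_derivative_PS[OF this assms(6), of n lam] nonneg
  show "\<exists>D. ((\<lambda>c. PS n lam c A (\<lambda>_. beta)) has_real_derivative D) (at 0) \<and> D \<ge> 0"
    unfolding assms(5) \<tau>_def e_def B_def by blast
qed

end
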